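(* Assume the following setting: $d=1$; $p:\mathbb{Z}\to[0,1)$ with $\sum_xp(x)=1$, $p(x)=0$ for $|x|>M$, and for every $u\in\mathbb{Z}$ the smallest additive subgroup containing $\{u+x:p(x)>0\}$ is $\mathbb{Z}$; $m_p=\sum_xxp(x)$, $b=-m_p$, $\sigma_1^2=\sum_x(x-m_p)^2p(x)>0$; $\{\xi_t(x)\}$ i.i.d. real, mean $0$, $\mathbb{E}[\xi_t(x)^{12}]<\infty$; harness process $h_{t+1}(x)=\sum_yp(x,y)h_t(y)+\xi_{t+1}(x)$ with $h_0(0)=0$, stationary initial increments $\eta_0(x)=h_0(x)-h_0(x-1)$ independent of $\{\xi_t\}_{t\ge1}$ with mean $\mu_0$, satisfying one of: (a) i.i.d. with $\mathbf{E}[\eta_0(x)^{12}]<\infty$; (b) strongly mixing with some $\delta>0$ such that $\mathbf{E}|\eta_0(0)|^{12+\delta}<\infty$ and $\sum_{j\ge0}(j+1)^{10+132/\delta}\alpha(j)<\infty$; (c) $\eta_0(x)=\sum_{y}\sum_{k\ge0}\xi_{-k}(y)[p^k(x,y)-p^k(x-1,y)]$. Let $\mathcal{Z}_n(t,r)=n^{-1/4}\{h_{\lfloor nt\rfloor}(\lfloor r\sqrt n\rfloor+\lfloor ntb\rfloor)-\mu_0r\sqrt n\}$. Then for any fixed $1<\gamma<3/2$ and every $\varepsilon>0$, \[\lim_{n\to\infty}\mathbf{P}\Bigl\{\sup_{\substack{(t,r),(s,q)\in[0,1]^2\\|(t,r)-(s,q)|<n^{-\gamma}}}|\mathcal{Z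}_n(t,r)-\mathcal{Z}_n(s,q)|>\varepsilon\Bigr\}=0.\]
   Context: $p(x,y)=p(y-x)$, $p^k$ the $k$-step transition. $|\cdot|$ is Euclidean distance in $\mathbb{R}^2$. Strong mixing coefficients: $\alpha(n)=\sup_k\sup_{A\in\mathcal{F}_{-\infty,k},B\in\mathcal{F}_{k+n,\infty}}|P(A\cap B)-P(A)P(B)|$ with $\mathcal{F}_{m,n}=\sigma\{\eta_0(x):m\le x\le n\}$; strongly mixing means $\alpha(n)\to0$. *)

theory Defs
  imports "HOL-Probability.Probability"
begin

definition int_subgroup_gen :: "int set \<Rightarrow> int set" where
  "int_subgroup_gen S = \<Inter>{G. 0 \<in> G \<and> (\<forall>a\<in>G. \<forall>b\<in>G. a - b \<in> G) \<and> S \<subseteq> G}"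

text \<open>k-step transition kernel as a function of the displacement: p^k(x,y) = kstep p k (y - x).\<close>
fun kstep :: "(int \<Rightarrow> real) \<Rightarrow> nat \<Rightarrow> int \<Rightarrow> real" where
  "kstep p 0 z = (if z = 0 then 1 else 0)"
| "kstep p (Suc k) z = (\<Sum>\<^sub>\<infinity>w. p w * kstep p k (z - w))"

definition gen_field :: "'a measure \<Rightarrow> ('i \<Rightarrow> 'a \<Rightarrow> real) \<Rightarrow> 'i set \<Rightarrow> 'a set set" where
  "gen_field M X I =
     sets (vimage_algebra (space M) (\<lambda>\<omega>. \<lambda>i\<in>I. X i \<omega>) (PiM I (\<lambda>_. (borel :: real measure))))"

definition strong_mixing_coeff :: "'a measure \<Rightarrow> (int \<Rightarrow> 'a \<Rightarrow> real) \<Rightarrow> nat \<Rightarrow> real" where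
  "strong_mixing_coeff M X n =
     Sup {\<bar>measure M (A \<inter> B) - measure M A * measure M B\<bar> | A B.
            \<exists>k::int. A \<in> gen_field M X {..k} \<and> B \<in> gen_field M X {k + int n..}}"

definition Zproc :: "(nat \<Rightarrow> int \<Rightarrow> 'a \<Rightarrow> real) \<Rightarrow> real \<Rightarrow> real \<Rightarrow> nat \<Rightarrow> real \<Rightarrow> real \<Rightarrow> 'a \<Rightarrow> real" where
  "Zproc h mu0 b n t r \<omega> =
     real n powr (-1/4) *
       (h (nat \<lfloor>real n * t\<rfloor>) (\<lfloor>r * sqrt (real n)\<rfloor> + \<lfloor>real n * t * b\<rfloor>) \<omega>
        - mu0 * r * sqrt (real n))"

end

theory Submission
  imports Defs
begin

text \<open>
  By Duhamel's formula the increment \<open>h\<^sub>k(x) - h\<^sub>k(x-1)\<close> is the \<open>p\<^sup>k\<close>-average of the initial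
  increments plus a sum of noise variables weighted by discrete gradients of \<open>p\<^bsup>k-j\<^esup>\<close>.
  These weights have bounded total squared mass: one step of the walk lowers \<open>\<Sum>\<^sub>z p\<^sup>k(z)\<^sup>2\<close>
  by half a Dirichlet form, and by aperiodicity the Dirichlet form dominates the energy of the
  unit shift. A Rosenthal-type bound for independent sums then bounds the twelfth moments of all
  increments uniformly (in case (c) the same argument applies to the initial increments).
  By Markov's inequality and a union bound over the \<open>O(n\<^sup>2)\<close> relevant space-time sites, outside
  an event of probability \<open>O(1/n)\<close> every increment and every noise variable there is at most
  \<open>c n\<^bsup>1/4\<^esup>\<close>. Since \<open>\<gamma> > 1\<close>, the grid points of two parameters at distance \<open>< n\<^bsup>-\<gamma>\<^esup>\<close>
  differ by at most one time step and two sites, so on the good event \<open>Z\<^sub>n\<close> moves by \<open>O(c)\<close>,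
  while the drift term \<open>\<mu>\<^sub>0 r \<surd>n\<close> contributes only \<open>n\<^bsup>1/4-\<gamma>\<^esup>\<close>.
\<close>

lemma sum_int_window_eq:
  fixes f :: "int \<Rightarrow> 'b::comm_monoid_add"
  assumes "finite A" "{-B..B} \<subseteq> A" "\<And>z. z \<in> A \<Longrightarrow> \<bar>z\<bar> > B \<Longrightarrow> f z = 0"
  shows "sum f A = sum f {-B..B}"
  by (rule sum.mono_neutral_right) (use assms in auto)

lemma sum_int_window_enlarge:
  fixes f :: "int \<Rightarrow> 'b::comm_monoid_add"
  assumes "\<And>z. \<bar>z\<bar> > B \<Longrightarrow> f z = 0" "B \<le> N"
  shows "(\<Sum>z\<in>{-N..N}. f z) = (\<Sum>z\<in>{-B..B}. f z)"
  by (rule sum_int_window_eq) (use assms in auto)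

lemma sum_int_window_shift:
  fixes f :: "int \<Rightarrow> 'b::comm_monoid_add"
  assumes "\<And>z. \<bar>z\<bar> > B \<Longrightarrow> f z = 0" "B + \<bar>c\<bar> \<le> N"
  shows "(\<Sum>z\<in>{-N..N}. f (z + c)) = (\<Sum>z\<in>{-N..N}. f z)"
proof -
  have "(\<Sum>z\<in>{-N..N}. f (z + c)) = (\<Sum>w\<in>(\<lambda>z. z + c) ` {-N..N}. f w)"
    by (subst sum.reindex) (auto simp: inj_on_def)
  also have "(\<lambda>z. z + c) ` {-N..N} = {-N+c..N+c}"
    by (auto simp: image_iff intro!: exI[of _ "_ - c"])
  also have "(\<Sum>w\<in>{-N+c..N+c}. f w) = (\<Sum>z\<in>{-B..B}. f z)"
    by (rule sum_int_window_eq) (use assms in auto)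
  also have "\<dots> = (\<Sum>z\<in>{-N..N}. f z)"
    by (rule sum_int_window_enlarge[symmetric]) (use assms in auto)
  finally show ?thesis .
qed

lemma infsum_int_window:
  fixes f :: "int \<Rightarrow> real"
  assumes "\<And>a. \<bar>a\<bar> > N \<Longrightarrow> f a = 0"
  shows "(\<Sum>\<^sub>\<infinity>a. f a) = (\<Sum>a\<in>{-N..N}. f a)"
proof -
  have "(\<Sum>\<^sub>\<infinity>a. f a) = infsum f {-N..N}"
    by (rule infsum_cong_neutral) (use assms in auto)
  then show ?thesis by simp
qed

lemma infsum_int_window_shift:
  fixes p H :: "int \<Rightarrow> real"
  assumes "\<And>a. \<bar>a\<bar> > N \<Longrightarrow> p a = 0"
  shows "(\<Sum>\<^sub>\<infinity>y. p (y - x) * H y) = (\<Sum>a\<in>{-N..N}. p a * H (x + a))"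
proof -
  have "(\<Sum>\<^sub>\<infinity>y. p (y - x) * H y) = (\<Sum>\<^sub>\<infinity>a. p a * H (x + a))"
    by (rule infsum_reindex_bij_witness[of UNIV "\<lambda>a. x + a" "\<lambda>y. y - x"]) auto
  also have "\<dots> = (\<Sum>a\<in>{-N..N}. p a * H (x + a))"
    by (rule infsum_int_window) (use assms in simp)
  finally show ?thesis .
qed

lemma has_sum_int_window:
  fixes p :: "int \<Rightarrow> real"
  assumes "(p has_sum s) UNIV" "\<And>x. \<bar>x\<bar> > N \<Longrightarrow> p x = 0"
  shows "(\<Sum>a\<in>{-N..N}. p a) = s"
  using assms infsum_int_window[of N p] by (simp add: has_sum_iff)

section \<open>The random walk and its Dirichlet form\<close>

lemma diff_sq_le:
  fixes u v :: real
  shows "(u - v)^2 \<le> 2 * u^2 + 2 * v^2"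
proof -
  have "0 \<le> (u + v)^2" by simp
  then show ?thesis by (simp add: power2_eq_square algebra_simps)
qed

locale bounded_walk =
  fixes p :: "int \<Rightarrow> real" and R :: nat
  assumes p_nonneg: "\<And>x. 0 \<le> p x"
    and p_vanish: "\<And>x. \<bar>x\<bar> > int R \<Longrightarrow> p x = 0"
    and p_sum: "(\<Sum>a\<in>{-int R..int R}. p a) = 1"
begin

fun walk_prob :: "nat \<Rightarrow> int \<Rightarrow> real" where
  "walk_prob 0 z = (if z = 0 then 1 else 0)"
| "walk_prob (Suc k) z = (\<Sum>a\<in>{-int R..int R}. p a * walk_prob k (z - a))"

lemma kstep_eq_walk_prob: "kstep p k z = walk_prob k z"
proof (induction k arbitrary: z)
  case (Suc k)
  have "kstep p (Suc k) z = (\<Sum>\<^sub>\<infinity>w. p w * walk_prob k (z - w))" by (simp add: Suc.IH)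
  also have "\<dots> = (\<Sum>w\<in>{-int R..int R}. p w * walk_prob k (z - w))"
    by (rule infsum_int_window) (simp add: p_vanish)
  finally show ?case by simp
qed simp

lemma walk_prob_nonneg: "0 \<le> walk_prob k z"
  by (induction k arbitrary: z) (auto intro!: sum_nonneg mult_nonneg_nonneg p_nonneg)

lemma walk_prob_eq_0: "\<bar>z\<bar> > int k * int R \<Longrightarrow> walk_prob k z = 0"
proof (induction k arbitrary: z)
  case (Suc k)
  have "walk_prob k (z - a) = 0" if "a \<in> {-int R..int R}" for a
    using Suc.prems that by (intro Suc.IH) (auto simp: algebra_simps abs_if split: if_splits)
  then show ?case by simp
qed simp

lemma walk_prob_sum: "int k * int R \<le> N \<Longrightarrow> (\<Sum>z\<in>{-N..N}. walk_prob k z) = 1"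
proof (induction k arbitrary: N)
  case 0 then show ?case by (simp add: sum.delta)
next
  case (Suc k)
  have shift: "(\<Sum>z\<in>{-N..N}. walk_prob k (z - a)) = 1" if a: "a \<in> {-int R..int R}" for a
  proof -
    have "(\<Sum>z\<in>{-N..N}. walk_prob k (z + - a)) = (\<Sum>z\<in>{-N..N}. walk_prob k z)"
      by (rule sum_int_window_shift[where B="int k * int R"])
         (use walk_prob_eq_0 a Suc.prems in \<open>auto simp: algebra_simps\<close>)
    also have "\<dots> = 1" by (rule Suc.IH) (use Suc.prems in \<open>auto simp: algebra_simps\<close>)
    finally show ?thesis by simp
  qed
  have "(\<Sum>z\<in>{-N..N}. walk_prob (Suc k) z)
      = (\<Sum>a\<in>{-int R..int R}. p a * (\<Sum>z\<in>{-N..N}. walk_prob k (z - a)))"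
    by (simp add: sum_distrib_left sum.swap[of _ "{-N..N}"])
  also have "\<dots> = 1" using p_sum by (simp add: shift)
  finally show ?case .
qed

lemma walk_prob_le_1: "walk_prob k z \<le> 1"
proof -
  define N where "N = max \<bar>z\<bar> (int k * int R)"
  have "walk_prob k z \<le> (\<Sum>w\<in>{-N..N}. walk_prob k w)"
    by (rule member_le_sum) (auto simp: N_def walk_prob_nonneg)
  also have "\<dots> = 1" by (rule walk_prob_sum) (auto simp: N_def)
  finally show ?thesis .
qed

lemma walk_prob_diff_abs_le_1: "\<bar>walk_prob i z - walk_prob i w\<bar> \<le> 1"
  using walk_prob_nonneg[of i z] walk_prob_nonneg[of i w] walk_prob_le_1[of i z] walk_prob_le_1[of i w]
  by linarith

definition vanishes_outside :: "int \<Rightarrow> (int \<Rightarrow> real) \<Rightarrow> bool" where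
  "vanishes_outside B f \<longleftrightarrow> (\<forall>z. \<bar>z\<bar> > B \<longrightarrow> f z = 0)"

definition shift_energy :: "int \<Rightarrow> int \<Rightarrow> (int \<Rightarrow> real) \<Rightarrow> real" where
  "shift_energy N c f = (\<Sum>w\<in>{-N..N}. (f w - f (w + c))^2)"

definition dirichlet_form :: "int \<Rightarrow> (int \<Rightarrow> real) \<Rightarrow> real" where
  "dirichlet_form N f =
     (\<Sum>a\<in>{-int R..int R}. \<Sum>b\<in>{-int R..int R}. p a * p b * shift_energy N (a - b) f)"

lemma walk_prob_vanishes_outside: "vanishes_outside (int i * int R) (walk_prob i)"
  unfolding vanishes_outside_def using walk_prob_eq_0 by auto

lemma shift_energy_nonneg: "0 \<le> shift_energy N c f"
  unfolding shift_energy_def by (auto intro: sum_nonneg)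

lemma dirichlet_form_nonneg: "0 \<le> dirichlet_form N f"
  unfolding dirichlet_form_def
  by (auto intro!: sum_nonneg mult_nonneg_nonneg p_nonneg shift_energy_nonneg)

lemma shift_energy_window:
  assumes "vanishes_outside B f" "B + \<bar>c\<bar> \<le> N"
  shows "shift_energy N c f = shift_energy (B + \<bar>c\<bar>) c f"
  unfolding shift_energy_def
  by (rule sum_int_window_enlarge) (use assms in \<open>auto simp: vanishes_outside_def\<close>)

lemma dirichlet_form_window:
  assumes f: "vanishes_outside B f" and N: "B + 2 * int R \<le> N"
  shows "dirichlet_form N f = dirichlet_form (B + 2 * int R) f"
  unfolding dirichlet_form_def
proof (intro sum.cong refl)
  fix a b assume "a \<in> {-int R..int R}" "b \<in> {-int R..int R}"
  then have "\<bar>a - b\<bar> \<le> 2 * int R" by auto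
  then have "shift_energy N (a - b) f = shift_energy (B + 2 * int R) (a - b) f"
    using shift_energy_window[OF f, of "a - b" N] shift_energy_window[OF f, of "a - b" "B + 2 * int R"] N
    by simp
  then show "p a * p b * shift_energy N (a - b) f = p a * p b * shift_energy (B + 2 * int R) (a - b) f"
    by simp
qed

lemma sum_shifted_product_eq:
  assumes f: "vanishes_outside B f" and N: "B + 3 * int R \<le> N"
    and a: "\<bar>a\<bar> \<le> int R" and b: "\<bar>b\<bar> \<le> int R"
  shows "(\<Sum>w\<in>{-N..N}. f (w - a) * f (w - b)) = (\<Sum>w\<in>{-N..N}. (f w)^2) - shift_energy N (a - b) f / 2"
proof -
  have sq: "(\<Sum>w\<in>{-N..N}. (f (w + c))^2) = (\<Sum>w\<in>{-N..N}. (f w)^2)" if "\<bar>c\<bar> \<le> int R" for c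
    by (rule sum_int_window_shift[where B=B]) (use f that N in \<open>auto simp: vanishes_outside_def\<close>)
  have energy: "(\<Sum>w\<in>{-N..N}. (f (w + - a) - f (w + - a + (a - b)))^2) = shift_energy N (a - b) f"
    unfolding shift_energy_def
    by (rule sum_int_window_shift[where B="B + 2 * int R" and f="\<lambda>w. (f w - f (w + (a - b)))^2"])
       (use f a b N in \<open>auto simp: vanishes_outside_def\<close>)
  have "(\<Sum>w\<in>{-N..N}. f (w - a) * f (w - b))
      = (\<Sum>w\<in>{-N..N}. ((f (w + - a))^2 + (f (w + - b))^2
                          - (f (w + - a) - f (w + - a + (a - b)))^2) / 2)"
    by (intro sum.cong refl) (simp add: power2_eq_square algebra_simps)
  also have "\<dots> = ((\<Sum>w\<in>{-N..N}. (f (w + - a))^2) + (\<Sum>w\<in>{-N..N}. (f (w + - b))^2)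
                 - (\<Sum>w\<in>{-N..N}. (f (w + - a) - f (w + - a + (a - b)))^2)) / 2"
    by (simp only: sum_divide_distrib[symmetric] sum_subtractf[symmetric] sum.distrib[symmetric])
  also have "\<dots> = (\<Sum>w\<in>{-N..N}. (f w)^2) - shift_energy N (a - b) f / 2"
    using sq[of "-a"] sq[of "-b"] energy a b by simp
  finally show ?thesis .
qed

lemma sum_sq_step_eq:
  assumes f: "vanishes_outside B f" and N: "B + 3 * int R \<le> N"
  shows "(\<Sum>w\<in>{-N..N}. (\<Sum>a\<in>{-int R..int R}. p a * f (w - a))^2)
       = (\<Sum>w\<in>{-N..N}. (f w)^2) - dirichlet_form N f / 2"
proof -
  define S where "S = (\<Sum>w\<in>{-N..N}. (f w)^2)"
  have "(\<Sum>w\<in>{-N..N}. (\<Sum>a\<in>{-int R..int R}. p a * f (w - a))^2)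
      = (\<Sum>w\<in>{-N..N}. \<Sum>a\<in>{-int R..int R}. \<Sum>b\<in>{-int R..int R}.
           p a * p b * (f (w - a) * f (w - b)))"
    by (simp add: power2_eq_square sum_product algebra_simps)
  also have "\<dots> = (\<Sum>a\<in>{-int R..int R}. \<Sum>b\<in>{-int R..int R}.
                     p a * p b * (\<Sum>w\<in>{-N..N}. f (w - a) * f (w - b)))"
    by (simp add: sum_distrib_left sum.swap[of _ "{-N..N}"])
  also have "\<dots> = (\<Sum>a\<in>{-int R..int R}. \<Sum>b\<in>{-int R..int R}.
                     p a * p b * (S - shift_energy N (a - b) f / 2))"
  proof (intro sum.cong refl)
    fix a b assume "a \<in> {-int R..int R}" "b \<in> {-int R..int R}"
    then show "p a * p b * (\<Sum>w\<in>{-N..N}. f (w - a) * f (w - b))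
             = p a * p b * (S - shift_energy N (a - b) f / 2)"
      using sum_shifted_product_eq[OF f N, of a b] unfolding S_def by (simp add: abs_le_iff)
  qed
  also have "\<dots> = S * ((\<Sum>a\<in>{-int R..int R}. p a) * (\<Sum>b\<in>{-int R..int R}. p b)) - dirichlet_form N f / 2"
    unfolding dirichlet_form_def
    by (simp add: sum_product right_diff_distrib sum_subtractf sum_distrib_left sum_divide_distrib
                  algebra_simps)
  finally show ?thesis using p_sum unfolding S_def by simp
qed

lemma shift_energy_diff_le:
  assumes f: "vanishes_outside B f" and B: "0 \<le> B"
  shows "shift_energy (B + \<bar>a - b\<bar>) (a - b) f
       \<le> 2 * shift_energy (B + \<bar>a\<bar>) a f + 2 * shift_energy (B + \<bar>b\<bar>) b f"
proof -
  define N where "N = B + \<bar>a\<bar> + 2 * \<bar>b\<bar>"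
  have "shift_energy (B + \<bar>a - b\<bar>) (a - b) f = shift_energy N (a - b) f"
    by (rule shift_energy_window[symmetric]) (use f in \<open>auto simp: N_def\<close>)
  also have "\<dots> \<le> (\<Sum>w\<in>{-N..N}. 2 * (f w - f (w + a))^2 + 2 * (f (w + (a - b)) - f (w + (a - b) + b))^2)"
    unfolding shift_energy_def
  proof (rule sum_mono)
    fix w
    have "(f w - f (w + (a - b)))^2 = ((f w - f (w + a)) - (f (w + (a - b)) - f (w + (a - b) + b)))^2"
      by (simp add: algebra_simps)
    also have "\<dots> \<le> 2 * (f w - f (w + a))^2 + 2 * (f (w + (a - b)) - f (w + (a - b) + b))^2"
      by (rule diff_sq_le)
    finally show "(f w - f (w + (a - b)))^2
        \<le> 2 * (f w - f (w + a))^2 + 2 * (f (w + (a - b)) - f (w + (a - b) + b))^2" .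
  qed
  also have "\<dots> = 2 * shift_energy N a f + 2 * shift_energy N b f"
  proof -
    have "(\<Sum>w\<in>{-N..N}. (f (w + (a - b)) - f (w + (a - b) + b))^2) = shift_energy N b f"
      unfolding shift_energy_def
      by (rule sum_int_window_shift[where B="B + \<bar>b\<bar>" and f="\<lambda>w. (f w - f (w + b))^2"])
         (use f B in \<open>auto simp: vanishes_outside_def N_def\<close>)
    then show ?thesis by (simp add: sum.distrib shift_energy_def flip: sum_distrib_left)
  qed
  also have "shift_energy N a f = shift_energy (B + \<bar>a\<bar>) a f"
    by (rule shift_energy_window) (use f in \<open>auto simp: N_def\<close>)
  also have "shift_energy N b f = shift_energy (B + \<bar>b\<bar>) b f"
    by (rule shift_energy_window) (use f B in \<open>auto simp: N_def\<close>)
  finally show ?thesis .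
qed

definition controlled_shifts :: "int set" where
  "controlled_shifts = {c. \<exists>K\<ge>0. \<forall>B f. 0 \<le> B \<longrightarrow> vanishes_outside B f \<longrightarrow>
      shift_energy (B + \<bar>c\<bar>) c f \<le> K * dirichlet_form (B + 2 * int R) f}"

lemma step_difference_controlled:
  assumes x: "p x > 0" and y: "p y > 0"
  shows "x - y \<in> controlled_shifts"
  unfolding controlled_shifts_def
proof (intro CollectI exI[of _ "1 / (p x * p y)"] conjI allI impI)
  have R: "\<bar>x\<bar> \<le> int R" "\<bar>y\<bar> \<le> int R" using x y p_vanish[of x] p_vanish[of y] by linarith+
  show "0 \<le> 1 / (p x * p y)" using x y by simp
  fix B f assume B: "0 \<le> B" and f: "vanishes_outside B f"
  let ?E = "\<lambda>a b. p a * p b * shift_energy (B + 2 * int R) (a - b) f"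
  have "shift_energy (B + \<bar>x - y\<bar>) (x - y) f = shift_energy (B + 2 * int R) (x - y) f"
    using shift_energy_window[OF f, of "x - y" "B + 2 * int R"] R by simp
  moreover have "?E x y \<le> (\<Sum>b\<in>{-int R..int R}. ?E x b)"
    using R by (intro member_le_sum) (auto intro!: mult_nonneg_nonneg p_nonneg shift_energy_nonneg)
  moreover have "(\<Sum>b\<in>{-int R..int R}. ?E x b) \<le> dirichlet_form (B + 2 * int R) f"
    unfolding dirichlet_form_def using R
    by (intro member_le_sum[where f="\<lambda>a. \<Sum>b\<in>{-int R..int R}. ?E a b"])
       (auto intro!: mult_nonneg_nonneg p_nonneg shift_energy_nonneg sum_nonneg)
  ultimately show "shift_energy (B + \<bar>x - y\<bar>) (x - y) f
      \<le> 1 / (p x * p y) * dirichlet_form (B + 2 * int R) f"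
    using x y by (simp add: field_simps)
qed

lemma controlled_shifts_diff:
  assumes "a \<in> controlled_shifts" "b \<in> controlled_shifts"
  shows "a - b \<in> controlled_shifts"
proof -
  obtain Ka Kb where K: "Ka \<ge> 0" "Kb \<ge> 0"
    and a: "\<And>B f. 0 \<le> B \<Longrightarrow> vanishes_outside B f \<Longrightarrow>
              shift_energy (B + \<bar>a\<bar>) a f \<le> Ka * dirichlet_form (B + 2 * int R) f"
    and b: "\<And>B f. 0 \<le> B \<Longrightarrow> vanishes_outside B f \<Longrightarrow>
              shift_energy (B + \<bar>b\<bar>) b f \<le> Kb * dirichlet_form (B + 2 * int R) f"
    using assms unfolding controlled_shifts_def by blast
  show ?thesis unfolding controlled_shifts_def
  proof (intro CollectI exI[of _ "2 * Ka + 2 * Kb"] conjI allI impI)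
    fix B f assume B: "0 \<le> B" and f: "vanishes_outside B f"
    show "shift_energy (B + \<bar>a - b\<bar>) (a - b) f \<le> (2 * Ka + 2 * Kb) * dirichlet_form (B + 2 * int R) f"
      using shift_energy_diff_le[OF f B, of a b] a[OF B f] b[OF B f] by (simp add: algebra_simps)
  qed (use K in simp)
qed

text \<open>Aperiodicity is only used here: the controlled shifts form a subgroup containing every
  difference of two steps, hence all of \<open>\<int>\<close>; in particular the unit shift is controlled.\<close>

lemma unit_shift_controlled:
  assumes aper: "\<And>u. int_subgroup_gen {u + x | x. p x > 0} = UNIV"
  shows "1 \<in> controlled_shifts"
proof -
  obtain s where s: "p s > 0"
  proof -
    have "\<exists>a\<in>{-int R..int R}. p a \<noteq> 0" using p_sum sum.neutral by (metis zero_neq_one)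
    then show ?thesis using p_nonneg that by (metis order_le_less)
  qed
  have "0 \<in> controlled_shifts"
    unfolding controlled_shifts_def by (auto simp: shift_energy_def dirichlet_form_nonneg)
  moreover have "{- s + x | x. p x > 0} \<subseteq> controlled_shifts"
  proof safe
    fix x assume "p x > 0"
    then show "- s + x \<in> controlled_shifts" using step_difference_controlled[OF _ s] by simp
  qed
  ultimately have "int_subgroup_gen {- s + x | x. p x > 0} \<subseteq> controlled_shifts"
    unfolding int_subgroup_gen_def by (intro Inter_lower CollectI conjI ballI controlled_shifts_diff)
  then show ?thesis using aper[of "- s"] by auto
qed

definition sq_mass :: "nat \<Rightarrow> real" where
  "sq_mass i = (\<Sum>w\<in>{-(int i * int R)..int i * int R}. (walk_prob i w)^2)"

lemma sq_mass_Suc: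
  "sq_mass (Suc i) = sq_mass i - dirichlet_form (int i * int R + 2 * int R) (walk_prob i) / 2"
proof -
  define N where "N = int i * int R + 3 * int R"
  have "sq_mass (Suc i) = (\<Sum>w\<in>{-N..N}. (walk_prob (Suc i) w)^2)"
    unfolding sq_mass_def
    by (rule sum_int_window_enlarge[symmetric])
       (auto simp: N_def algebra_simps walk_prob_eq_0 simp del: walk_prob.simps)
  also have "\<dots> = (\<Sum>w\<in>{-N..N}. (\<Sum>a\<in>{-int R..int R}. p a * walk_prob i (w - a))^2)" by simp
  also have "\<dots> = (\<Sum>w\<in>{-N..N}. (walk_prob i w)^2) - dirichlet_form N (walk_prob i) / 2"
    by (rule sum_sq_step_eq[OF walk_prob_vanishes_outside]) (auto simp: N_def)
  also have "(\<Sum>w\<in>{-N..N}. (walk_prob i w)^2) = sq_mass i"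
    unfolding sq_mass_def by (rule sum_int_window_enlarge) (auto simp: N_def walk_prob_eq_0)
  also have "dirichlet_form N (walk_prob i) = dirichlet_form (int i * int R + 2 * int R) (walk_prob i)"
    by (rule dirichlet_form_window[OF walk_prob_vanishes_outside]) (auto simp: N_def)
  finally show ?thesis .
qed

lemma sum_dirichlet_form_walk_prob_le:
  "(\<Sum>i<k. dirichlet_form (int i * int R + 2 * int R) (walk_prob i)) \<le> 2"
proof -
  have "(\<Sum>i<k. dirichlet_form (int i * int R + 2 * int R) (walk_prob i)) = 2 * (sq_mass 0 - sq_mass k)"
    by (induction k) (auto simp: sq_mass_Suc)
  moreover have "sq_mass 0 = 1" "0 \<le> sq_mass k" by (auto simp: sq_mass_def intro: sum_nonneg)
  ultimately show ?thesis by simp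
qed

lemma walk_gradient_energy_bounded:
  assumes aper: "\<And>u. int_subgroup_gen {u + x | x. p x > 0} = UNIV"
  obtains C where "\<And>k N. int k * int R + 1 \<le> N \<Longrightarrow>
      (\<Sum>i<k. \<Sum>z\<in>{-N..N}. (walk_prob i z - walk_prob i (z + 1))^2) \<le> C"
proof -
  obtain K where K: "K \<ge> 0" and ctrl: "\<And>B f. 0 \<le> B \<Longrightarrow> vanishes_outside B f \<Longrightarrow>
      shift_energy (B + 1) 1 f \<le> K * dirichlet_form (B + 2 * int R) f"
    using unit_shift_controlled[OF aper] unfolding controlled_shifts_def by auto
  have "(\<Sum>i<k. \<Sum>z\<in>{-N..N}. (walk_prob i z - walk_prob i (z + 1))^2) \<le> 2 * K"
    if kN: "int k * int R + 1 \<le> N" for k N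
  proof -
    have "(\<Sum>z\<in>{-N..N}. (walk_prob i z - walk_prob i (z + 1))^2)
        = shift_energy (int i * int R + 1) 1 (walk_prob i)" if "i < k" for i
    proof -
      have "int i * int R \<le> int k * int R" using that by (simp add: mult_right_mono)
      then show ?thesis
        using kN shift_energy_window[OF walk_prob_vanishes_outside[of i], of 1 N]
        by (simp add: shift_energy_def)
    qed
    then have "(\<Sum>i<k. \<Sum>z\<in>{-N..N}. (walk_prob i z - walk_prob i (z + 1))^2)
        = (\<Sum>i<k. shift_energy (int i * int R + 1) 1 (walk_prob i))" by simp
    also have "\<dots> \<le> (\<Sum>i<k. K * dirichlet_form (int i * int R + 2 * int R) (walk_prob i))"
      by (intro sum_mono ctrl walk_prob_vanishes_outside) auto
    also have "\<dots> \<le> K * 2"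
      using sum_dirichlet_form_walk_prob_le[of k] K by (simp add: mult_left_mono flip: sum_distrib_left)
    finally show ?thesis by simp
  qed
  then show ?thesis using that by blast
qed

end

section \<open>Even moments of sums of independent variables\<close>

lemma abs_pow_le_1_plus_pow:
  fixes x :: real
  assumes "q \<le> n"
  shows "\<bar>x\<bar>^q \<le> 1 + \<bar>x\<bar>^n"
proof (cases "\<bar>x\<bar> \<le> 1")
  case True
  then have "\<bar>x\<bar>^q \<le> 1" by (simp add: power_le_one)
  then show ?thesis by (smt (verit) zero_le_power abs_ge_zero)
next
  case False
  then have "\<bar>x\<bar>^q \<le> \<bar>x\<bar>^n" by (intro power_increasing assms) auto
  then show ?thesis by simp
qed

lemma abs_add_pow_le:
  fixes a b :: real
  shows "\<bar>a + b\<bar>^n \<le> 2^n * (\<bar>a\<bar>^n + \<bar>b\<bar>^n)"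
proof -
  have "\<bar>a + b\<bar>^n \<le> (2 * max \<bar>a\<bar> \<bar>b\<bar>)^n" by (intro power_mono) auto
  also have "\<dots> = 2^n * (max \<bar>a\<bar> \<bar>b\<bar>)^n" by (simp add: power_mult_distrib)
  also have "(max \<bar>a\<bar> \<bar>b\<bar>)^n \<le> \<bar>a\<bar>^n + \<bar>b\<bar>^n" by (cases "\<bar>a\<bar> \<le> \<bar>b\<bar>") (auto simp: max_def)
  finally show ?thesis by simp
qed

fun moment_const :: "nat \<Rightarrow> real" where
  "moment_const 0 = 1"
| "moment_const (Suc m) = 4^(Suc m) * (1 + moment_const m)"

lemma moment_const_nonneg: "0 \<le> moment_const m"
  by (induction m) auto

context prob_space
begin

lemma integrable_pow_le_pow:
  fixes f :: "'a \<Rightarrow> real"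
  assumes "integrable M (\<lambda>\<omega>. \<bar>f \<omega>\<bar>^n)" "f \<in> borel_measurable M" "q \<le> n"
  shows "integrable M (\<lambda>\<omega>. \<bar>f \<omega>\<bar>^q)" "integrable M (\<lambda>\<omega>. f \<omega>^q)"
proof -
  have i: "integrable M (\<lambda>\<omega>. 1 + \<bar>f \<omega>\<bar>^n)" using assms(1) by simp
  show "integrable M (\<lambda>\<omega>. \<bar>f \<omega>\<bar>^q)"
    by (rule Bochner_Integration.integrable_bound[OF i])
       (use assms(2) abs_pow_le_1_plus_pow[OF assms(3)] in auto)
  show "integrable M (\<lambda>\<omega>. f \<omega>^q)"
    by (rule Bochner_Integration.integrable_bound[OF i])
       (use assms(2) abs_pow_le_1_plus_pow[OF assms(3)] in \<open>auto simp: power_abs\<close>)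
qed

lemma integrable_abs_sum_pow:
  fixes Y :: "'i \<Rightarrow> 'a \<Rightarrow> real"
  assumes "finite J" "\<And>i. i \<in> J \<Longrightarrow> Y i \<in> borel_measurable M"
    "\<And>i. i \<in> J \<Longrightarrow> integrable M (\<lambda>\<omega>. \<bar>Y i \<omega>\<bar>^n)"
  shows "integrable M (\<lambda>\<omega>. \<bar>\<Sum>i\<in>J. Y i \<omega>\<bar>^n)"
  using assms
proof (induction J rule: finite_induct)
  case empty
  then show ?case by (cases n) auto
next
  case (insert j J)
  have "integrable M (\<lambda>\<omega>. 2^n * (\<bar>Y j \<omega>\<bar>^n + \<bar>\<Sum>i\<in>J. Y i \<omega>\<bar>^n))"
    using insert by auto
  then show ?case
    by (rule Bochner_Integration.integrable_bound) (use insert abs_add_pow_le in auto)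
qed

lemma abs_expectation_pow_le:
  fixes S :: "'a \<Rightarrow> real"
  assumes S: "S \<in> borel_measurable M" and int: "integrable M (\<lambda>\<omega>. \<bar>S \<omega>\<bar>^(2*m))" and j: "j \<le> 2*m"
  shows "\<bar>expectation (\<lambda>\<omega>. S \<omega>^j)\<bar> \<le> 1 + expectation (\<lambda>\<omega>. S \<omega>^(2*m))"
proof -
  have ij: "integrable M (\<lambda>\<omega>. \<bar>S \<omega>\<bar>^j)" and im: "integrable M (\<lambda>\<omega>. S \<omega>^(2*m))"
    using integrable_pow_le_pow[OF int S] j by auto
  have "\<bar>expectation (\<lambda>\<omega>. S \<omega>^j)\<bar> \<le> expectation (\<lambda>\<omega>. \<bar>S \<omega>\<bar>^j)"
    using integral_abs_bound[of M "\<lambda>\<omega>. S \<omega>^j"] by (simp add: power_abs)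
  also have "\<dots> \<le> expectation (\<lambda>\<omega>. 1 + S \<omega>^(2*m))"
    by (intro integral_mono ij) (use im abs_pow_le_1_plus_pow[OF j] in \<open>auto simp: power_even_abs\<close>)
  also have "\<dots> = 1 + expectation (\<lambda>\<omega>. S \<omega>^(2*m))" using im by (simp add: prob_space)
  finally show ?thesis .
qed

lemma indep_mixed_moment:
  fixes Y S :: "'a \<Rightarrow> real"
  assumes ind: "indep_var borel Y borel S"
    and Y: "Y \<in> borel_measurable M" and S: "S \<in> borel_measurable M"
    and Yi: "integrable M (\<lambda>\<omega>. \<bar>Y \<omega>\<bar>^n)" and Si: "integrable M (\<lambda>\<omega>. \<bar>S \<omega>\<bar>^n)"
    and kj: "k \<le> n" "j \<le> n"
  shows "integrable M (\<lambda>\<omega>. Y \<omega>^k * S \<omega>^j)"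
    and "expectation (\<lambda>\<omega>. Y \<omega>^k * S \<omega>^j) = expectation (\<lambda>\<omega>. Y \<omega>^k) * expectation (\<lambda>\<omega>. S \<omega>^j)"
proof -
  have indkj: "indep_var borel (\<lambda>\<omega>. Y \<omega>^k) borel (\<lambda>\<omega>. S \<omega>^j)"
    using indep_var_compose[OF ind, of "\<lambda>x. x^k" borel "\<lambda>x. x^j" borel] by (simp add: comp_def)
  note powers = integrable_pow_le_pow(2)[OF Yi Y kj(1)] integrable_pow_le_pow(2)[OF Si S kj(2)]
  show "integrable M (\<lambda>\<omega>. Y \<omega>^k * S \<omega>^j)"
    by (rule indep_var_integrable[OF indkj powers])
  show "expectation (\<lambda>\<omega>. Y \<omega>^k * S \<omega>^j) = expectation (\<lambda>\<omega>. Y \<omega>^k) * expectation (\<lambda>\<omega>. S \<omega>^j)"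
    by (rule indep_var_lebesgue_integral[OF indkj powers])
qed

lemma indep_mixed_moment_le:
  fixes Y S :: "'a \<Rightarrow> real"
  assumes ind: "indep_var borel Y borel S"
    and Y: "Y \<in> borel_measurable M" and S: "S \<in> borel_measurable M"
    and Yi: "integrable M (\<lambda>\<omega>. \<bar>Y \<omega>\<bar>^n)" and Si: "integrable M (\<lambda>\<omega>. \<bar>S \<omega>\<bar>^n)"
    and n: "n = 2 * Suc m" and k: "2 \<le> k" "k \<le> n"
    and Yk: "expectation (\<lambda>\<omega>. \<bar>Y \<omega>\<bar>^k) \<le> v"
  shows "expectation (\<lambda>\<omega>. Y \<omega>^k * S \<omega>^(n-k)) \<le> v * (1 + expectation (\<lambda>\<omega>. S \<omega>^(2*m)))"
proof -
  have "\<bar>expectation (\<lambda>\<omega>. Y \<omega>^k)\<bar> \<le> v"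
    using integral_abs_bound[of M "\<lambda>\<omega>. Y \<omega>^k"] Yk by (simp add: power_abs)
  moreover have "\<bar>expectation (\<lambda>\<omega>. S \<omega>^(n-k))\<bar> \<le> 1 + expectation (\<lambda>\<omega>. S \<omega>^(2*m))"
    using k n integrable_pow_le_pow(1)[OF Si S, of "2*m"] by (intro abs_expectation_pow_le S) auto
  ultimately have "\<bar>expectation (\<lambda>\<omega>. Y \<omega>^k)\<bar> * \<bar>expectation (\<lambda>\<omega>. S \<omega>^(n-k))\<bar>
      \<le> v * (1 + expectation (\<lambda>\<omega>. S \<omega>^(2*m)))"
    by (intro mult_mono) auto
  then show ?thesis
    using abs_ge_self[of "expectation (\<lambda>\<omega>. Y \<omega>^k) * expectation (\<lambda>\<omega>. S \<omega>^(n-k))"]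
    unfolding indep_mixed_moment(2)[OF ind Y S Yi Si k(2) diff_le_self] abs_mult by linarith
qed

text \<open>Binomial expansion of \<open>(Y + S)\<^sup>n\<close>: the term linear in the centred \<open>Y\<close> vanishes
  by independence, and every term of higher order in \<open>Y\<close> costs at most a lower even moment of \<open>S\<close>.\<close>

lemma indep_add_even_moment_le:
  fixes Y S :: "'a \<Rightarrow> real"
  assumes ind: "indep_var borel Y borel S"
    and Y: "Y \<in> borel_measurable M" and S: "S \<in> borel_measurable M"
    and Yi: "integrable M (\<lambda>\<omega>. \<bar>Y \<omega>\<bar>^n)" and Si: "integrable M (\<lambda>\<omega>. \<bar>S \<omega>\<bar>^n)"
    and Y0: "expectation Y = 0"
    and Ymom: "\<And>k. 2 \<le> k \<Longrightarrow> k \<le> n \<Longrightarrow> expectation (\<lambda>\<omega>. \<bar>Y \<omega>\<bar>^k) \<le> v"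
    and n: "n = 2 * Suc m"
  shows "expectation (\<lambda>\<omega>. (Y \<omega> + S \<omega>)^n)
       \<le> expectation (\<lambda>\<omega>. S \<omega>^n) + 2^n * (v * (1 + expectation (\<lambda>\<omega>. S \<omega>^(2*m))))"
proof -
  define A where "A = expectation (\<lambda>\<omega>. S \<omega>^(2*m))"
  have "0 \<le> expectation (\<lambda>\<omega>. \<bar>Y \<omega>\<bar>^2)" by (intro integral_nonneg_AE) auto
  then have v: "0 \<le> v" using order_trans[OF _ Ymom[of 2]] n by simp
  have A: "0 \<le> A" unfolding A_def by (intro integral_nonneg_AE) (auto simp: zero_le_even_power)
  note mixed = indep_mixed_moment[OF ind Y S Yi Si]
  have term_le: "of_nat (n choose k) * expectation (\<lambda>\<omega>. Y \<omega>^k * S \<omega>^(n-k))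
      \<le> (if k = 0 then expectation (\<lambda>\<omega>. S \<omega>^n) else 0) + of_nat (n choose k) * (v * (1 + A))"
    if k: "k \<le> n" for k
  proof -
    consider "k = 0" | "k = 1" | "2 \<le> k" by linarith
    then show ?thesis
    proof cases
      case 1
      have "0 \<le> v * (1 + A)" using v A by simp
      then show ?thesis using 1 by simp
    next
      case 2
      then show ?thesis using mixed(2)[OF k, of "n - k"] Y0 v A by simp
    next
      case 3
      then show ?thesis
        using indep_mixed_moment_le[OF ind Y S Yi Si n 3 k Ymom[OF 3 k]] unfolding A_def
        by (simp add: mult_left_mono)
    qed
  qed
  have "expectation (\<lambda>\<omega>. (Y \<omega> + S \<omega>)^n)
      = expectation (\<lambda>\<omega>. \<Sum>k\<le>n. of_nat (n choose k) * (Y \<omega>^k * S \<omega>^(n-k)))"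
    by (simp add: binomial_ring mult.assoc)
  also have "\<dots> = (\<Sum>k\<le>n. of_nat (n choose k) * expectation (\<lambda>\<omega>. Y \<omega>^k * S \<omega>^(n-k)))"
    by (subst Bochner_Integration.integral_sum) (auto intro!: mixed(1))
  also have "\<dots> \<le> (\<Sum>k\<le>n. (if k = 0 then expectation (\<lambda>\<omega>. S \<omega>^n) else 0)
                             + of_nat (n choose k) * (v * (1 + A)))"
    by (intro sum_mono term_le) auto
  also have "\<dots> = expectation (\<lambda>\<omega>. S \<omega>^n) + 2^n * (v * (1 + A))"
  proof -
    have "(\<Sum>k\<le>n. real (n choose k)) = 2^n"
      using choose_row_sum[of n] by (metis of_nat_numeral of_nat_power of_nat_sum)
    then show ?thesis by (simp add: sum.distrib sum_distrib_right[symmetric])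
  qed
  finally show ?thesis unfolding A_def .
qed

lemma indep_sum_even_moment_step:
  fixes Y :: "'i \<Rightarrow> 'a \<Rightarrow> real"
  assumes I: "finite I" and ind: "indep_vars (\<lambda>_. borel) Y I"
    and meas: "\<And>i. i \<in> I \<Longrightarrow> Y i \<in> borel_measurable M"
    and int: "\<And>i. i \<in> I \<Longrightarrow> integrable M (\<lambda>\<omega>. \<bar>Y i \<omega>\<bar>^(2*q))"
    and mean: "\<And>i. i \<in> I \<Longrightarrow> expectation (Y i) = 0"
    and mom: "\<And>i r. i \<in> I \<Longrightarrow> 2 \<le> r \<Longrightarrow> r \<le> 2*q \<Longrightarrow> expectation (\<lambda>\<omega>. \<bar>Y i \<omega>\<bar>^r) \<le> v i"
    and m: "Suc m \<le> q"
    and prev: "\<And>J. J \<subseteq> I \<Longrightarrow> expectation (\<lambda>\<omega>. (\<Sum>i\<in>J. Y i \<omega>)^(2*m)) \<le> A"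
    and J: "J \<subseteq> I"
  shows "expectation (\<lambda>\<omega>. (\<Sum>i\<in>J. Y i \<omega>)^(2 * Suc m)) \<le> (\<Sum>i\<in>J. v i) * 2^(2 * Suc m) * (1 + A)"
proof -
  define n where "n = 2 * Suc m"
  have "finite J" using J I by (rule finite_subset)
  then show ?thesis using J unfolding n_def[symmetric]
  proof (induction J rule: finite_induct)
    case (insert j J)
    define S where "S = (\<lambda>\<omega>. \<Sum>i\<in>J. Y i \<omega>)"
    have jI: "j \<in> I" and JI: "J \<subseteq> I" using insert by auto
    have n_le: "n \<le> 2*q" using m by (simp add: n_def)
    have Yn: "integrable M (\<lambda>\<omega>. \<bar>Y i \<omega>\<bar>^n)" if "i \<in> I" for i
      using integrable_pow_le_pow(1)[OF int[OF that] meas[OF that] n_le] .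
    have S: "S \<in> borel_measurable M" unfolding S_def using meas JI by (intro borel_measurable_sum) auto
    have Sn: "integrable M (\<lambda>\<omega>. \<bar>S \<omega>\<bar>^n)" unfolding S_def
      by (rule integrable_abs_sum_pow) (use insert.hyps meas Yn JI in auto)
    have "indep_var borel (Y j) borel S"
      unfolding S_def by (rule indep_vars_sum) (use insert ind in \<open>auto intro: indep_vars_subset\<close>)
    then have "expectation (\<lambda>\<omega>. (Y j \<omega> + S \<omega>)^n)
        \<le> expectation (\<lambda>\<omega>. S \<omega>^n) + 2^n * (v j * (1 + expectation (\<lambda>\<omega>. S \<omega>^(2*m))))"
      by (rule indep_add_even_moment_le[OF _ meas[OF jI] S Yn[OF jI] Sn mean[OF jI] _ n_def])
         (use mom[OF jI] n_le in auto)
    also have "\<dots> \<le> (\<Sum>i\<in>J. v i) * 2^n * (1 + A) + 2^n * (v j * (1 + A))"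
    proof -
      have "0 \<le> expectation (\<lambda>\<omega>. \<bar>Y j \<omega>\<bar>^2)" by (intro integral_nonneg_AE) auto
      then have "0 \<le> v j" using order_trans[OF _ mom[OF jI, of 2]] m by simp
      then show ?thesis
        using insert.IH JI prev[OF JI] unfolding S_def by (intro add_mono mult_left_mono) auto
    qed
    finally show ?case using insert.hyps unfolding S_def by (simp add: algebra_simps)
  qed (simp add: n_def)
qed

lemma indep_sum_even_moment_le:
  fixes Y :: "'i \<Rightarrow> 'a \<Rightarrow> real"
  assumes I: "finite I" and ind: "indep_vars (\<lambda>_. borel) Y I"
    and meas: "\<And>i. i \<in> I \<Longrightarrow> Y i \<in> borel_measurable M"
    and int: "\<And>i. i \<in> I \<Longrightarrow> integrable M (\<lambda>\<omega>. \<bar>Y i \<omega>\<bar>^(2*q))"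
    and mean: "\<And>i. i \<in> I \<Longrightarrow> expectation (Y i) = 0"
    and mom: "\<And>i r. i \<in> I \<Longrightarrow> 2 \<le> r \<Longrightarrow> r \<le> 2*q \<Longrightarrow> expectation (\<lambda>\<omega>. \<bar>Y i \<omega>\<bar>^r) \<le> v i"
  shows "expectation (\<lambda>\<omega>. (\<Sum>i\<in>I. Y i \<omega>)^(2*q)) \<le> moment_const q * (1 + (\<Sum>i\<in>I. v i))^q"
proof -
  define U where "U = 1 + (\<Sum>i\<in>I. v i)"
  have "expectation (\<lambda>\<omega>. (\<Sum>i\<in>J. Y i \<omega>)^(2*m)) \<le> moment_const m * U^m"
    if "m \<le> q" "J \<subseteq> I" for m J
    using that
  proof (induction m arbitrary: J)
    case 0
    then show ?case by (simp add: prob_space)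
  next
    case (Suc m)
    have v: "0 \<le> v i" if "i \<in> I" for i
    proof -
      have "0 \<le> expectation (\<lambda>\<omega>. \<bar>Y i \<omega>\<bar>^2)" by (intro integral_nonneg_AE) auto
      then show ?thesis using order_trans[OF _ mom[OF that, of 2]] Suc.prems by simp
    qed
    then have U: "1 \<le> U" "(\<Sum>i\<in>J. v i) \<le> U - 1"
      unfolding U_def using sum_mono2[OF I Suc.prems(2), of v] by (auto intro: sum_nonneg)
    have "expectation (\<lambda>\<omega>. (\<Sum>i\<in>J. Y i \<omega>)^(2 * Suc m))
        \<le> (\<Sum>i\<in>J. v i) * 2^(2 * Suc m) * (1 + moment_const m * U^m)"
      by (rule indep_sum_even_moment_step[OF I ind meas int mean mom])
         (use Suc in auto)
    also have "\<dots> \<le> U * 4^(Suc m) * ((1 + moment_const m) * U^m)"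
    proof (intro mult_mono)
      have "1 \<le> U^m" using U by (simp add: one_le_power)
      then show "1 + moment_const m * U^m \<le> (1 + moment_const m) * U^m"
        by (simp add: algebra_simps)
    qed (use U moment_const_nonneg[of m] v Suc.prems in \<open>auto simp: power_mult intro!: sum_nonneg\<close>)
    also have "\<dots> = moment_const (Suc m) * U^(Suc m)" by (simp add: algebra_simps)
    finally show ?case .
  qed
  from this[of q I] show ?thesis unfolding U_def by simp
qed

lemma prob_abs_gt_le_even_moment:
  fixes f :: "'a \<Rightarrow> real"
  assumes n: "even n" and f: "f \<in> borel_measurable M" and i: "integrable M (\<lambda>\<omega>. f \<omega> ^ n)"
    and C: "expectation (\<lambda>\<omega>. f \<omega> ^ n) \<le> C" and \<theta>: "0 < \<theta>"
  shows "prob {\<omega>\<in>space M. \<theta> < \<bar>f \<omega>\<bar>} \<le> C / \<theta>^n"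
proof -
  have "{\<omega>\<in>space M. \<theta> < \<bar>f \<omega>\<bar>} \<subseteq> {\<omega>\<in>space M. \<theta>^n \<le> f \<omega> ^ n}"
  proof safe
    fix \<omega> assume "\<theta> < \<bar>f \<omega>\<bar>"
    then have "\<theta>^n \<le> \<bar>f \<omega>\<bar>^n" using \<theta> by (intro power_mono) auto
    then show "\<theta>^n \<le> f \<omega> ^ n" by (simp add: power_even_abs[OF n])
  qed
  then have "prob {\<omega>\<in>space M. \<theta> < \<bar>f \<omega>\<bar>} \<le> prob {\<omega>\<in>space M. \<theta>^n \<le> f \<omega> ^ n}"
    by (intro finite_measure_mono) (use f in measurable)
  also have "\<dots> \<le> expectation (\<lambda>\<omega>. f \<omega> ^ n) / \<theta>^n"
    by (rule integral_Markov_inequality_measure[OF i, where A="space M"])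
       (use \<theta> n in \<open>auto simp: zero_le_even_power\<close>)
  also have "\<dots> \<le> C / \<theta>^n" using C \<theta> by (intro divide_right_mono) auto
  finally show ?thesis .
qed

lemma prob_le_of_subset:
  assumes "A \<subseteq> B" "B \<in> sets M"
  shows "prob A \<le> prob B"
  using assms finite_measure_mono measure_notin_sets[of A M] by (cases "A \<in> sets M") auto

lemma even_moment_le_of_AE_limit:
  fixes f :: "'a \<Rightarrow> real" and S :: "nat \<Rightarrow> 'a \<Rightarrow> real"
  assumes n: "even n" and f: "f \<in> borel_measurable M" and S: "\<And>K. S K \<in> borel_measurable M"
    and lim: "AE \<omega> in M. (\<lambda>K. S K \<omega>) \<longlonglongrightarrow> f \<omega>"
    and Si: "\<And>K. integrable M (\<lambda>\<omega>. S K \<omega> ^ n)" and SC: "\<And>K. expectation (\<lambda>\<omega>. S K \<omega> ^ n) \<le> C"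
  shows "integrable M (\<lambda>\<omega>. f \<omega> ^ n)" "expectation (\<lambda>\<omega>. f \<omega> ^ n) \<le> C"
proof -
  have pos: "0 \<le> g \<omega> ^ n" for g :: "'a \<Rightarrow> real" and \<omega> using n by (simp add: zero_le_even_power)
  have "0 \<le> expectation (\<lambda>\<omega>. S 0 \<omega> ^ n)" by (intro integral_nonneg_AE) (simp add: pos)
  then have C0: "0 \<le> C" using SC[of 0] by simp
  have "(\<integral>\<^sup>+\<omega>. ennreal (f \<omega> ^ n) \<partial>M) = (\<integral>\<^sup>+\<omega>. liminf (\<lambda>K. ennreal (S K \<omega> ^ n)) \<partial>M)"
    using lim
  proof (intro nn_integral_cong_AE, eventually_elim)
    case (elim \<omega>)
    have "(\<lambda>K. ennreal (S K \<omega> ^ n)) \<longlonglongrightarrow> ennreal (f \<omega> ^ n)"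
      by (intro tendsto_ennrealI tendsto_power elim)
    then show ?case by (simp add: lim_imp_Liminf)
  qed
  also have "\<dots> \<le> liminf (\<lambda>K. \<integral>\<^sup>+\<omega>. ennreal (S K \<omega> ^ n) \<partial>M)"
    by (rule nn_integral_liminf) (use S in simp)
  also have "\<dots> \<le> liminf (\<lambda>K. ennreal C)"
  proof (rule Liminf_mono, intro always_eventually allI)
    fix K
    have "(\<integral>\<^sup>+\<omega>. ennreal (S K \<omega> ^ n) \<partial>M) = ennreal (expectation (\<lambda>\<omega>. S K \<omega> ^ n))"
      by (rule nn_integral_eq_integral[OF Si]) (use pos in auto)
    then show "(\<integral>\<^sup>+\<omega>. ennreal (S K \<omega> ^ n) \<partial>M) \<le> ennreal C" using SC[of K] by (simp add: ennreal_leI)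
  qed
  finally have nn: "(\<integral>\<^sup>+\<omega>. ennreal (f \<omega> ^ n) \<partial>M) \<le> ennreal C" by (simp add: Liminf_const)
  show "integrable M (\<lambda>\<omega>. f \<omega> ^ n)"
    by (rule integrableI_nonneg) (use f nn pos in \<open>auto simp: top.not_eq_extremum intro: le_less_trans\<close>)
  have "expectation (\<lambda>\<omega>. f \<omega> ^ n) = enn2real (\<integral>\<^sup>+\<omega>. ennreal (f \<omega> ^ n) \<partial>M)"
    by (rule integral_eq_nn_integral) (use f pos in auto)
  also have "\<dots> \<le> C" using nn C0 by (simp add: enn2real_leI)
  finally show "expectation (\<lambda>\<omega>. f \<omega> ^ n) \<le> C" .
qed

lemma integrable_pow_of_integrable_powr:
  fixes X :: "'a \<Rightarrow> real"
  assumes X: "X \<in> borel_measurable M" and a: "real n \<le> a"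
    and i: "integrable M (\<lambda>\<omega>. \<bar>X \<omega>\<bar> powr a)"
  shows "integrable M (\<lambda>\<omega>. X \<omega> ^ n)"
proof -
  have ib: "integrable M (\<lambda>\<omega>. 1 + \<bar>X \<omega>\<bar> powr a)" using i by simp
  have "\<bar>X \<omega> ^ n\<bar> \<le> \<bar>1 + \<bar>X \<omega>\<bar> powr a\<bar>" for \<omega>
  proof (cases "\<bar>X \<omega>\<bar> \<le> 1")
    case True
    then have "\<bar>X \<omega> ^ n\<bar> \<le> 1" by (simp add: power_abs power_le_one)
    moreover have "\<bar>1 + \<bar>X \<omega>\<bar> powr a\<bar> = 1 + \<bar>X \<omega>\<bar> powr a" by simp
    ultimately show ?thesis using powr_ge_zero[of "\<bar>X \<omega>\<bar>" a] by linarith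
  next
    case False
    then have "\<bar>X \<omega>\<bar> ^ n = \<bar>X \<omega>\<bar> powr n" by (simp add: powr_realpow)
    also have "\<dots> \<le> \<bar>X \<omega>\<bar> powr a" using False a by (intro powr_mono) auto
    finally show ?thesis by (simp add: power_abs)
  qed
  then show ?thesis by (intro Bochner_Integration.integrable_bound[OF ib]) (use X in auto)
qed

end

section \<open>The noise field\<close>

lemma integral_comp_eq_of_distr_eq:
  fixes X Y :: "'a \<Rightarrow> real" and g :: "real \<Rightarrow> real"
  assumes d: "distr M borel X = distr M borel Y"
    and X: "X \<in> borel_measurable M" and Y: "Y \<in> borel_measurable M" and g: "g \<in> borel_measurable borel"
  shows "integrable M (\<lambda>\<omega>. g (X \<omega>)) \<longleftrightarrow> integrable M (\<lambda>\<omega>. g (Y \<omega>))"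
    and "integral\<^sup>L M (\<lambda>\<omega>. g (X \<omega>)) = integral\<^sup>L M (\<lambda>\<omega>. g (Y \<omega>))"
  using integrable_distr_eq[OF X g] integrable_distr_eq[OF Y g]
    integral_distr[OF X g] integral_distr[OF Y g] d by simp_all

lemma distr_eq_of_shift_invariant:
  fixes X :: "int \<Rightarrow> 'a \<Rightarrow> real"
  assumes X: "\<And>x. X x \<in> borel_measurable M"
    and shift: "\<And>k. distr M (PiM UNIV (\<lambda>_. borel)) (\<lambda>\<omega> x. X (x + k) \<omega>)
                       = distr M (PiM UNIV (\<lambda>_. borel)) (\<lambda>\<omega> x. X x \<omega>)"
  shows "distr M borel (X k) = distr M borel (X 0)"
proof -
  have m: "(\<lambda>\<omega> x. X (x + j) \<omega>) \<in> measurable M (PiM UNIV (\<lambda>_. borel))" for j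
    by (rule measurable_PiM_single') (use X in auto)
  have pr: "(\<lambda>g. g 0) \<in> measurable (PiM UNIV (\<lambda>_. borel :: real measure)) borel"
    by (rule measurable_component_singleton) simp
  have marginal: "distr M borel (X j) = distr (distr M (PiM UNIV (\<lambda>_. borel)) (\<lambda>\<omega> x. X (x + j) \<omega>)) borel (\<lambda>g. g 0)"
    for j by (subst distr_distr[OF pr m]) (simp add: comp_def)
  show ?thesis using marginal[of k] marginal[of 0] shift[of k] shift[of 0] by simp
qed

locale iid_noise = prob_space M for M :: "'a measure" +
  fixes xi :: "int \<Rightarrow> int \<Rightarrow> 'a \<Rightarrow> real"
  assumes xi_meas: "\<And>t x. xi t x \<in> borel_measurable M"
    and xi_indep: "indep_vars (\<lambda>_. borel) (\<lambda>(t, x). xi t x) UNIV"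
    and xi_ident: "\<And>t x. distr M borel (xi t x) = distr M borel (xi 0 0)"
    and xi_mean: "expectation (xi 0 0) = 0"
    and xi_mom: "integrable M (\<lambda>\<omega>. (xi 0 0 \<omega>) ^ 12)"
begin

definition noise_moment :: real where
  "noise_moment = 1 + expectation (\<lambda>\<omega>. \<bar>xi 0 0 \<omega>\<bar>^12)"

lemma noise_moment_ge_1: "1 \<le> noise_moment"
  unfolding noise_moment_def by (simp add: integral_nonneg_AE)

lemma expectation_xi: "expectation (xi t x) = 0"
  using integral_comp_eq_of_distr_eq(2)[OF xi_ident[of t x] xi_meas xi_meas, of "\<lambda>v. v"] xi_mean by simp

lemma integrable_xi_abs_pow_12: "integrable M (\<lambda>\<omega>. \<bar>xi t x \<omega>\<bar>^12)"
  using integral_comp_eq_of_distr_eq(1)[OF xi_ident[of t x] xi_meas xi_meas, of "\<lambda>v. \<bar>v\<bar>^12"] xi_mom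
  by (simp add: power_even_abs)

lemma xi_abs_pow_moment:
  assumes r: "r \<le> 12"
  shows "integrable M (\<lambda>\<omega>. \<bar>xi t x \<omega>\<bar>^r)" and "expectation (\<lambda>\<omega>. \<bar>xi t x \<omega>\<bar>^r) \<le> noise_moment"
proof -
  show i: "integrable M (\<lambda>\<omega>. \<bar>xi t x \<omega>\<bar>^r)"
    by (rule integrable_pow_le_pow(1)[OF integrable_xi_abs_pow_12 xi_meas r])
  have "expectation (\<lambda>\<omega>. \<bar>xi t x \<omega>\<bar>^r) \<le> expectation (\<lambda>\<omega>. 1 + \<bar>xi t x \<omega>\<bar>^12)"
    by (intro integral_mono i abs_pow_le_1_plus_pow r) (use integrable_xi_abs_pow_12 in auto)
  also have "\<dots> = 1 + expectation (\<lambda>\<omega>. \<bar>xi 0 0 \<omega>\<bar>^12)"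
    using integrable_xi_abs_pow_12[of t x] prob_space
      integral_comp_eq_of_distr_eq(2)[OF xi_ident[of t x] xi_meas xi_meas, of "\<lambda>v. \<bar>v\<bar>^12"]
    by simp
  finally show "expectation (\<lambda>\<omega>. \<bar>xi t x \<omega>\<bar>^r) \<le> noise_moment" unfolding noise_moment_def .
qed

lemma noise_combination_moment_le:
  fixes I :: "(int \<times> int) set" and c :: "int \<times> int \<Rightarrow> real"
  assumes I: "finite I" and c1: "\<And>i. i \<in> I \<Longrightarrow> \<bar>c i\<bar> \<le> 1" and V: "(\<Sum>i\<in>I. (c i)^2) \<le> V"
  shows "integrable M (\<lambda>\<omega>. (\<Sum>i\<in>I. c i * xi (fst i) (snd i) \<omega>)^12)"
    and "expectation (\<lambda>\<omega>. (\<Sum>i\<in>I. c i * xi (fst i) (snd i) \<omega>)^12)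
           \<le> moment_const 6 * (1 + noise_moment * V)^6"
proof -
  define Y where "Y i \<omega> = c i * xi (fst i) (snd i) \<omega>" for i \<omega>
  have Ymeas: "Y i \<in> borel_measurable M" for i unfolding Y_def using xi_meas by simp
  have ind: "indep_vars (\<lambda>_. borel) Y I"
  proof -
    have "indep_vars (\<lambda>_. borel) (\<lambda>i \<omega>. (\<lambda>v. c i * v) ((\<lambda>(t, x). xi t x) i \<omega>)) I"
      by (rule indep_vars_compose2[OF indep_vars_subset[OF xi_indep]]) auto
    then show ?thesis by (rule indep_vars_cong[THEN iffD1, rotated 3]) (auto simp: Y_def split: prod.splits)
  qed
  have Y12: "integrable M (\<lambda>\<omega>. \<bar>Y i \<omega>\<bar>^12)" for i
    unfolding Y_def using integrable_xi_abs_pow_12[of "fst i" "snd i"] by (simp add: abs_mult power_mult_distrib)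
  have Ymean: "expectation (Y i) = 0" for i unfolding Y_def using expectation_xi by simp
  have Ymom: "expectation (\<lambda>\<omega>. \<bar>Y i \<omega>\<bar>^r) \<le> (c i)^2 * noise_moment"
    if i: "i \<in> I" and r: "2 \<le> r" "r \<le> 12" for i r
  proof -
    have "expectation (\<lambda>\<omega>. \<bar>Y i \<omega>\<bar>^r) = \<bar>c i\<bar>^r * expectation (\<lambda>\<omega>. \<bar>xi (fst i) (snd i) \<omega>\<bar>^r)"
      unfolding Y_def by (simp add: abs_mult power_mult_distrib)
    also have "\<dots> \<le> (c i)^2 * noise_moment"
    proof (rule mult_mono)
      have "\<bar>c i\<bar>^r \<le> \<bar>c i\<bar>^2" using c1[OF i] r by (intro power_decreasing) auto
      then show "\<bar>c i\<bar>^r \<le> (c i)^2" by simp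
    qed (use xi_abs_pow_moment r in \<open>auto intro: integral_nonneg_AE\<close>)
    finally show ?thesis .
  qed
  show "integrable M (\<lambda>\<omega>. (\<Sum>i\<in>I. c i * xi (fst i) (snd i) \<omega>)^12)"
    using integrable_abs_sum_pow[OF I, of Y 12] Ymeas Y12 unfolding Y_def by (simp add: power_even_abs)
  have "expectation (\<lambda>\<omega>. (\<Sum>i\<in>I. Y i \<omega>)^(2*6)) \<le> moment_const 6 * (1 + (\<Sum>i\<in>I. (c i)^2 * noise_moment))^6"
    by (rule indep_sum_even_moment_le[OF I ind]) (use Ymeas Y12 Ymom Ymean in auto)
  also have "(\<Sum>i\<in>I. (c i)^2 * noise_moment) \<le> noise_moment * V"
  proof -
    have "(\<Sum>i\<in>I. (c i)^2 * noise_moment) = (\<Sum>i\<in>I. (c i)^2) * noise_moment"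
      by (simp add: sum_distrib_right)
    also have "\<dots> \<le> V * noise_moment" using V noise_moment_ge_1 by (intro mult_right_mono) auto
    finally show ?thesis by (simp add: mult.commute)
  qed
  then have "moment_const 6 * (1 + (\<Sum>i\<in>I. (c i)^2 * noise_moment))^6 \<le> moment_const 6 * (1 + noise_moment * V)^6"
    using noise_moment_ge_1
    by (intro mult_left_mono power_mono moment_const_nonneg) (auto intro!: add_nonneg_nonneg sum_nonneg)
  finally show "expectation (\<lambda>\<omega>. (\<Sum>i\<in>I. c i * xi (fst i) (snd i) \<omega>)^12)
      \<le> moment_const 6 * (1 + noise_moment * V)^6" unfolding Y_def by simp
qed

lemma noise_double_sum_moment_le:
  fixes N x :: int and s :: "nat \<Rightarrow> int" and g :: "nat \<Rightarrow> int \<Rightarrow> real"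
  assumes s: "inj_on s A" and A: "finite A"
    and g1: "\<And>j z. \<bar>g j z\<bar> \<le> 1" and V: "(\<Sum>j\<in>A. \<Sum>z\<in>{-N..N}. (g j z)^2) \<le> V"
  shows "integrable M (\<lambda>\<omega>. (\<Sum>j\<in>A. \<Sum>z\<in>{-N..N}. g j z * xi (s j) (x + z) \<omega>)^12)"
    and "expectation (\<lambda>\<omega>. (\<Sum>j\<in>A. \<Sum>z\<in>{-N..N}. g j z * xi (s j) (x + z) \<omega>)^12)
           \<le> moment_const 6 * (1 + noise_moment * V)^6"
proof -
  define \<phi> where "\<phi> = (\<lambda>(j, z). (s j, x + z))"
  define c where "c i = g (the_inv_into A s (fst i)) (snd i - x)" for i
  have inj: "inj_on \<phi> (A \<times> {-N..N})" using s unfolding \<phi>_def by (auto simp: inj_on_def)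
  have c\<phi>: "c (\<phi> jz) = g (fst jz) (snd jz)" if "jz \<in> A \<times> {-N..N}" for jz
    using the_inv_into_f_f[OF s] that unfolding c_def \<phi>_def by (auto split: prod.splits)
  have reindex: "(\<Sum>j\<in>A. \<Sum>z\<in>{-N..N}. F (g j z) (s j) (x + z))
      = (\<Sum>i\<in>\<phi> ` (A \<times> {-N..N}). F (c i) (fst i) (snd i))" for F :: "real \<Rightarrow> int \<Rightarrow> int \<Rightarrow> real"
    by (simp add: sum.reindex[OF inj] sum.cartesian_product c\<phi>) (simp add: \<phi>_def split_beta)
  have fin: "finite (\<phi> ` (A \<times> {-N..N}))" using A by simp
  have V': "(\<Sum>i\<in>\<phi> ` (A \<times> {-N..N}). (c i)^2) \<le> V"
    using V reindex[of "\<lambda>v _ _. v^2"] by simp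
  have c1: "\<bar>c i\<bar> \<le> 1" for i unfolding c_def by (rule g1)
  note r = noise_combination_moment_le[OF fin c1 V']
  show "integrable M (\<lambda>\<omega>. (\<Sum>j\<in>A. \<Sum>z\<in>{-N..N}. g j z * xi (s j) (x + z) \<omega>)^12)"
    using r(1) g1 reindex[of "\<lambda>v t y. v * xi t y _"] unfolding c_def by simp
  show "expectation (\<lambda>\<omega>. (\<Sum>j\<in>A. \<Sum>z\<in>{-N..N}. g j z * xi (s j) (x + z) \<omega>)^12)
      \<le> moment_const 6 * (1 + noise_moment * V)^6"
    using r(2) g1 reindex[of "\<lambda>v t y. v * xi t y _"] unfolding c_def by simp
qed

end

section \<open>Duhamel's formula\<close>

context bounded_walk
begin

lemma infsum_kstep_gradient_eq:
  fixes X :: "int \<Rightarrow> real"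
  assumes N: "int k * int R + 1 \<le> N"
  shows "(\<Sum>\<^sub>\<infinity>y. X y * (kstep p k (y - x) - kstep p k (y - x + 1)))
       = (\<Sum>z\<in>{-N..N}. (walk_prob k z - walk_prob k (z + 1)) * X (x + z))"
proof -
  have "(\<Sum>\<^sub>\<infinity>y. X y * (kstep p k (y - x) - kstep p k (y - x + 1)))
      = (\<Sum>\<^sub>\<infinity>y. (walk_prob k (y - x) - walk_prob k (y - x + 1)) * X y)"
    by (simp add: kstep_eq_walk_prob mult.commute)
  also have "\<dots> = (\<Sum>z\<in>{-(int k * int R + 1)..int k * int R + 1}. (walk_prob k z - walk_prob k (z + 1)) * X (x + z))"
    by (rule infsum_int_window_shift) (auto simp: walk_prob_eq_0)
  also have "\<dots> = (\<Sum>z\<in>{-N..N}. (walk_prob k z - walk_prob k (z + 1)) * X (x + z))"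
    using N by (intro sum_int_window_enlarge[symmetric]) (auto simp: walk_prob_eq_0)
  finally show ?thesis .
qed

lemma sum_convolution_window:
  fixes f g :: "int \<Rightarrow> real"
  assumes f: "\<And>z. \<bar>z\<bar> > N' \<Longrightarrow> f z = 0" and N: "N' + int R \<le> N"
  shows "(\<Sum>a\<in>{-int R..int R}. p a * (\<Sum>z\<in>{-N'..N'}. f z * g (a + z)))
       = (\<Sum>w\<in>{-N..N}. (\<Sum>a\<in>{-int R..int R}. p a * f (w - a)) * g w)"
proof -
  have "(\<Sum>z\<in>{-N'..N'}. f z * g (a + z)) = (\<Sum>w\<in>{-N..N}. f (w - a) * g w)"
    if a: "a \<in> {-int R..int R}" for a
  proof -
    have "(\<Sum>z\<in>{-N'..N'}. f z * g (a + z)) = (\<Sum>z\<in>{-N..N}. f z * g (a + z))"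
      by (rule sum_int_window_enlarge[symmetric]) (use f N a in auto)
    also have "\<dots> = (\<Sum>w\<in>{-N..N}. f (w + - a) * g (a + (w + - a)))"
      by (rule sum_int_window_shift[where B=N' and f="\<lambda>z. f z * g (a + z)", symmetric]) (use f N a in auto)
    finally show ?thesis by simp
  qed
  then have "(\<Sum>a\<in>{-int R..int R}. p a * (\<Sum>z\<in>{-N'..N'}. f z * g (a + z)))
      = (\<Sum>a\<in>{-int R..int R}. p a * (\<Sum>w\<in>{-N..N}. f (w - a) * g w))" by simp
  also have "\<dots> = (\<Sum>w\<in>{-N..N}. (\<Sum>a\<in>{-int R..int R}. p a * f (w - a)) * g w)"
    by (simp add: sum_distrib_left sum_distrib_right sum.swap[of _ "{-N..N}"] mult.assoc)
  finally show ?thesis .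
qed

lemma sum_walk_prob_0:
  assumes "0 \<le> N"
  shows "(\<Sum>z\<in>{-N..N}. walk_prob 0 z * f z) = f 0"
proof -
  have "(\<Sum>z\<in>{-N..N}. walk_prob 0 z * f z) = (\<Sum>z\<in>{-N..N}. if z = 0 then f z else 0)"
    by (intro sum.cong) auto
  then show ?thesis using assms by simp
qed

lemma duhamel_formula:
  fixes h :: "nat \<Rightarrow> int \<Rightarrow> real" and X :: "int \<Rightarrow> int \<Rightarrow> real"
  assumes step: "\<And>t x. h (Suc t) x = (\<Sum>a\<in>{-int R..int R}. p a * h t (x + a)) + X (int t + 1) x"
  shows "int k * int R \<le> N \<Longrightarrow> h k x = (\<Sum>z\<in>{-N..N}. walk_prob k z * h 0 (x + z))
           + (\<Sum>j\<in>{1..k}. \<Sum>z\<in>{-N..N}. walk_prob (k - j) z * X (int j) (x + z))"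
proof (induction k arbitrary: x N)
  case 0
  then show ?case using sum_walk_prob_0[of N "\<lambda>z. h 0 (x + z)"] by simp
next
  case (Suc k)
  define N' where "N' = N - int R"
  have N': "int k * int R \<le> N'" using Suc.prems by (simp add: N'_def algebra_simps)
  have N0: "0 \<le> N" using Suc.prems by (smt (verit) of_nat_0_le_iff mult_nonneg_nonneg)
  have propagate: "(\<Sum>a\<in>{-int R..int R}. p a * (\<Sum>z\<in>{-N'..N'}. walk_prob i z * g (x + a + z)))
      = (\<Sum>w\<in>{-N..N}. walk_prob (Suc i) w * g (x + w))" if i: "i \<le> k" for i g
  proof -
    have "walk_prob i z = 0" if "\<bar>z\<bar> > N'" for z
    proof -
      have "int i * int R \<le> int k * int R" using i by (simp add: mult_right_mono)
      then show ?thesis using that N' by (intro walk_prob_eq_0) linarith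
    qed
    then have "(\<Sum>a\<in>{-int R..int R}. p a * (\<Sum>z\<in>{-N'..N'}. walk_prob i z * (\<lambda>v. g (x + v)) (a + z)))
      = (\<Sum>w\<in>{-N..N}. (\<Sum>a\<in>{-int R..int R}. p a * walk_prob i (w - a)) * (\<lambda>v. g (x + v)) w)"
      by (intro sum_convolution_window) (auto simp: N'_def)
    then show ?thesis by (simp add: add.assoc)
  qed
  have "h (Suc k) x = (\<Sum>a\<in>{-int R..int R}. p a * h k (x + a)) + X (int k + 1) x" by (rule step)
  also have "\<dots> = (\<Sum>a\<in>{-int R..int R}. p a * (\<Sum>z\<in>{-N'..N'}. walk_prob k z * h 0 (x + a + z)))
      + (\<Sum>j\<in>{1..k}. \<Sum>a\<in>{-int R..int R}. p a * (\<Sum>z\<in>{-N'..N'}. walk_prob (k - j) z * X (int j) (x + a + z)))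
      + X (int k + 1) x"
    by (simp add: Suc.IH[OF N'] distrib_left sum.distrib sum_distrib_left) (rule sum.swap)
  also have "\<dots> = (\<Sum>w\<in>{-N..N}. walk_prob (Suc k) w * h 0 (x + w))
      + (\<Sum>j\<in>{1..k}. \<Sum>w\<in>{-N..N}. walk_prob (Suc k - j) w * X (int j) (x + w))
      + (\<Sum>z\<in>{-N..N}. walk_prob (Suc k - Suc k) z * X (int (Suc k)) (x + z))"
    using propagate[of k] propagate[of "k - _"] sum_walk_prob_0[OF N0, of "\<lambda>z. X (int (Suc k)) (x + z)"]
    by (simp add: Suc_diff_le add.commute)
  also have "\<dots> = (\<Sum>w\<in>{-N..N}. walk_prob (Suc k) w * h 0 (x + w))
      + (\<Sum>j\<in>{1..Suc k}. \<Sum>w\<in>{-N..N}. walk_prob (Suc k - j) w * X (int j) (x + w))"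
    by (simp add: atLeastAtMostSuc_conv add.assoc)
  finally show ?case .
qed

lemma duhamel_increment:
  fixes h :: "nat \<Rightarrow> int \<Rightarrow> real" and X :: "int \<Rightarrow> int \<Rightarrow> real"
  assumes step: "\<And>t x. h (Suc t) x = (\<Sum>a\<in>{-int R..int R}. p a * h t (x + a)) + X (int t + 1) x"
    and N: "int k * int R + 2 \<le> N"
  shows "h k x - h k (x - 1) = (\<Sum>z\<in>{-N..N}. walk_prob k z * (h 0 (x + z) - h 0 (x + z - 1)))
           + (\<Sum>j\<in>{1..k}. \<Sum>z\<in>{-N..N}. (walk_prob (k - j) z - walk_prob (k - j) (z + 1)) * X (int j) (x + z))"
proof -
  have shift: "(\<Sum>z\<in>{-N..N}. walk_prob i z * X (int j) (x - 1 + z))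
             = (\<Sum>z\<in>{-N..N}. walk_prob i (z + 1) * X (int j) (x + z))" if i: "i \<le> k" for i j
  proof -
    have "int i * int R \<le> int k * int R" using i by (simp add: mult_right_mono)
    then have "(\<Sum>z\<in>{-N..N}. walk_prob i (z + 1) * X (int j) (x + z))
        = (\<Sum>z\<in>{-N..N}. (\<lambda>z. walk_prob i (z + 1) * X (int j) (x + z)) (z + - 1))"
      using N by (intro sum_int_window_shift[symmetric, where B="int i * int R + 1"]) (auto intro!: walk_prob_eq_0)
    then show ?thesis by (simp add: algebra_simps)
  qed
  have "h k x - h k (x - 1)
      = (\<Sum>z\<in>{-N..N}. walk_prob k z * (h 0 (x + z) - h 0 (x - 1 + z)))
      + (\<Sum>j\<in>{1..k}. \<Sum>z\<in>{-N..N}. walk_prob (k - j) z * X (int j) (x + z)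
                                   - walk_prob (k - j) z * X (int j) (x - 1 + z))"
    using duhamel_formula[OF step, of k N x] duhamel_formula[OF step, of k N "x - 1"] N
    by (simp add: sum_subtractf right_diff_distrib)
  also have "\<dots> = (\<Sum>z\<in>{-N..N}. walk_prob k z * (h 0 (x + z) - h 0 (x + z - 1)))
      + (\<Sum>j\<in>{1..k}. \<Sum>z\<in>{-N..N}. (walk_prob (k - j) z - walk_prob (k - j) (z + 1)) * X (int j) (x + z))"
    using shift by (simp add: sum_subtractf left_diff_distrib algebra_simps)
  finally show ?thesis .
qed

end

section \<open>Twelfth moments of the increments\<close>

lemma sum_reverse_atLeastAtMost:
  fixes f :: "nat \<Rightarrow> 'b::comm_monoid_add"
  shows "(\<Sum>j\<in>{1..k}. f (k - j)) = (\<Sum>i<k. f i)"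
  by (rule sum.reindex_bij_witness[of _ "\<lambda>i. k - i" "\<lambda>j. k - j"]) auto

locale noise_walk = iid_noise M xi + bounded_walk p R for M :: "'a measure" and xi p R
begin

text \<open>In the stationary case (c) the initial increments are themselves a series in the noise,
  with exactly the gradient weights that control the noise part of later increments.\<close>

lemma stationary_series_moment_le:
  fixes eta :: "'a \<Rightarrow> real" and x :: int
  assumes eta: "eta \<in> borel_measurable M"
    and grad: "\<And>k N. int k * int R + 1 \<le> N \<Longrightarrow>
        (\<Sum>i<k. \<Sum>z\<in>{-N..N}. (walk_prob i z - walk_prob i (z + 1))^2) \<le> Cg"
    and series: "AE \<omega> in M. (\<lambda>k. \<Sum>\<^sub>\<infinity>y. xi (- int k) y \<omega> * (kstep p k (y - x) - kstep p k (y - x + 1)))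
                   sums eta \<omega>"
  shows "integrable M (\<lambda>\<omega>. eta \<omega> ^ 12)"
    and "expectation (\<lambda>\<omega>. eta \<omega> ^ 12) \<le> moment_const 6 * (1 + noise_moment * Cg)^6"
proof -
  define N where "N K = int K * int R + 1" for K :: nat
  define S where "S K \<omega> = (\<Sum>k<K. \<Sum>z\<in>{-N K..N K}.
                    (walk_prob k z - walk_prob k (z + 1)) * xi (- int k) (x + z) \<omega>)" for K \<omega>
  have "S K \<omega> = (\<Sum>k<K. \<Sum>\<^sub>\<infinity>y. xi (- int k) y \<omega> * (kstep p k (y - x) - kstep p k (y - x + 1)))"
    for K \<omega> unfolding S_def
    by (intro sum.cong refl infsum_kstep_gradient_eq[symmetric]) (auto simp: N_def mult_right_mono)
  then have lim: "AE \<omega> in M. (\<lambda>K. S K \<omega>) \<longlonglongrightarrow> eta \<omega>"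
    using series by (simp add: sums_def)
  have S: "S K \<in> borel_measurable M" for K unfolding S_def using xi_meas by simp
  have inj: "inj_on (\<lambda>k::nat. - int k) {..<K}" for K by (auto simp: inj_on_def)
  have V: "(\<Sum>k\<in>{..<K}. \<Sum>z\<in>{-N K..N K}. (walk_prob k z - walk_prob k (z + 1))^2) \<le> Cg" for K
    using grad[of K "N K"] by (simp add: N_def)
  note bound = noise_double_sum_moment_le[OF inj _ walk_prob_diff_abs_le_1 V, of K x for K, folded S_def]
  show "integrable M (\<lambda>\<omega>. eta \<omega> ^ 12)"
    "expectation (\<lambda>\<omega>. eta \<omega> ^ 12) \<le> moment_const 6 * (1 + noise_moment * Cg)^6"
    by (rule even_moment_le_of_AE_limit[OF _ eta S lim bound]; simp)+
qed

lemma initial_increment_moment_bounded: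
  fixes eta :: "int \<Rightarrow> 'a \<Rightarrow> real"
  assumes eta: "\<And>x. eta x \<in> borel_measurable M"
    and shift: "\<And>k. distr M (PiM UNIV (\<lambda>_. borel)) (\<lambda>\<omega> x. eta (x + k) \<omega>)
                    = distr M (PiM UNIV (\<lambda>_. borel)) (\<lambda>\<omega> x. eta x \<omega>)"
    and grad: "\<And>k N. int k * int R + 1 \<le> N \<Longrightarrow>
        (\<Sum>i<k. \<Sum>z\<in>{-N..N}. (walk_prob i z - walk_prob i (z + 1))^2) \<le> Cg"
    and cases: "integrable M (\<lambda>\<omega>. eta 0 \<omega> ^ 12)
      \<or> (\<exists>\<delta>>0. integrable M (\<lambda>\<omega>. \<bar>eta 0 \<omega>\<bar> powr (12 + \<delta>)))
      \<or> (\<forall>x. AE \<omega> in M. (\<lambda>k. \<Sum>\<^sub>\<infinity>y. xi (- int k) y \<omega> * (kstep p k (y - x) - kstep p k (y - x + 1)))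
                          sums eta x \<omega>)"
  obtains Ce where "\<And>x. integrable M (\<lambda>\<omega>. eta x \<omega> ^ 12)" "\<And>x. expectation (\<lambda>\<omega>. eta x \<omega> ^ 12) \<le> Ce"
proof -
  consider "integrable M (\<lambda>\<omega>. eta 0 \<omega> ^ 12)"
    | "\<forall>x. AE \<omega> in M. (\<lambda>k. \<Sum>\<^sub>\<infinity>y. xi (- int k) y \<omega> * (kstep p k (y - x) - kstep p k (y - x + 1)))
                        sums eta x \<omega>"
    using cases integrable_pow_of_integrable_powr[OF eta, of 12 "12 + _" 0] by force
  then show ?thesis
  proof cases
    case 1
    note same_law = integral_comp_eq_of_distr_eq[OF distr_eq_of_shift_invariant[OF eta shift] eta eta, of "\<lambda>v. v ^ 12"]
    show ?thesis
      by (rule that[of "expectation (\<lambda>\<omega>. eta 0 \<omega> ^ 12)"]) (use same_law 1 in \<open>auto intro: eq_refl\<close>)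
  next
    case 2
    then show ?thesis using stationary_series_moment_le[OF eta grad] that by blast
  qed
qed

end

locale harness = noise_walk M xi p R for M :: "'a measure" and xi p R +
  fixes h :: "nat \<Rightarrow> int \<Rightarrow> 'a \<Rightarrow> real" and eta :: "int \<Rightarrow> 'a \<Rightarrow> real" and Ce Cg :: real
  assumes h_step: "\<And>t x \<omega>. \<omega> \<in> space M \<Longrightarrow>
        h (Suc t) x \<omega> = (\<Sum>a\<in>{-int R..int R}. p a * h t (x + a) \<omega>) + xi (int t + 1) x \<omega>"
    and eta_h: "\<And>x \<omega>. \<omega> \<in> space M \<Longrightarrow> eta x \<omega> = h 0 x \<omega> - h 0 (x - 1) \<omega>"
    and eta_meas: "\<And>x. eta x \<in> borel_measurable M"
    and integrable_eta_pow: "\<And>x. integrable M (\<lambda>\<omega>. eta x \<omega> ^ 12)"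
    and eta_moment_le: "\<And>x. expectation (\<lambda>\<omega>. eta x \<omega> ^ 12) \<le> Ce"
    and gradient_energy_le: "\<And>k N. int k * int R + 1 \<le> N \<Longrightarrow>
        (\<Sum>i<k. \<Sum>z\<in>{-N..N}. (walk_prob i z - walk_prob i (z + 1))^2) \<le> Cg"
begin

definition window :: "nat \<Rightarrow> int" where
  "window k = int k * int R + 2"

definition initial_part :: "nat \<Rightarrow> int \<Rightarrow> 'a \<Rightarrow> real" where
  "initial_part k x \<omega> = (\<Sum>z\<in>{-window k..window k}. walk_prob k z * eta (x + z) \<omega>)"

definition noise_part :: "nat \<Rightarrow> int \<Rightarrow> 'a \<Rightarrow> real" where
  "noise_part k x \<omega> = (\<Sum>j\<in>{1..k}. \<Sum>z\<in>{-window k..window k}.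
      (walk_prob (k - j) z - walk_prob (k - j) (z + 1)) * xi (int j) (x + z) \<omega>)"

definition increment :: "nat \<Rightarrow> int \<Rightarrow> 'a \<Rightarrow> real" where
  "increment k x \<omega> = initial_part k x \<omega> + noise_part k x \<omega>"

definition increment_moment_bound :: real where
  "increment_moment_bound = 2^12 * (Ce + moment_const 6 * (1 + noise_moment * Cg)^6)"

lemma increment_eq:
  assumes "\<omega> \<in> space M"
  shows "h k x \<omega> - h k (x - 1) \<omega> = increment k x \<omega>"
  using duhamel_increment[where h="\<lambda>t y. h t y \<omega>" and X="\<lambda>t y. xi t y \<omega>", of k "window k" x]
    h_step[OF assms] eta_h[OF assms]
  by (simp add: increment_def initial_part_def noise_part_def window_def)

lemma increment_measurable: "increment k x \<in> borel_measurable M"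
  unfolding increment_def initial_part_def noise_part_def using eta_meas xi_meas by simp

lemma initial_part_moment:
  "integrable M (\<lambda>\<omega>. initial_part k x \<omega> ^ 12)" "expectation (\<lambda>\<omega>. initial_part k x \<omega> ^ 12) \<le> Ce"
proof -
  define N where "N = window k"
  have N: "int k * int R \<le> N" by (simp add: N_def window_def)
  have "integrable M (\<lambda>\<omega>. \<bar>initial_part k x \<omega>\<bar>^12)" unfolding initial_part_def
    by (rule integrable_abs_sum_pow)
       (use eta_meas integrable_eta_pow in \<open>auto simp: abs_mult power_mult_distrib power_even_abs\<close>)
  then show i: "integrable M (\<lambda>\<omega>. initial_part k x \<omega> ^ 12)" by (simp add: power_even_abs)
  \<comment> \<open>Jensen: \<open>initial_part k x \<omega>\<close> is a convex combination of values of \<open>eta\<close>.\<close>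
  have "initial_part k x \<omega> ^ 12 \<le> (\<Sum>z\<in>{-N..N}. walk_prob k z * eta (x + z) \<omega> ^ 12)" for \<omega>
    using convex_on_sum[OF _ _ convex_power_even[of 12], of "{-N..N}" "walk_prob k" "\<lambda>z. eta (x + z) \<omega>"]
      walk_prob_sum[OF N] walk_prob_nonneg N
    unfolding initial_part_def N_def[symmetric] by fastforce
  then have "expectation (\<lambda>\<omega>. initial_part k x \<omega> ^ 12)
      \<le> expectation (\<lambda>\<omega>. \<Sum>z\<in>{-N..N}. walk_prob k z * eta (x + z) \<omega> ^ 12)"
    by (intro integral_mono i) (use integrable_eta_pow in auto)
  also have "\<dots> = (\<Sum>z\<in>{-N..N}. walk_prob k z * expectation (\<lambda>\<omega>. eta (x + z) \<omega> ^ 12))"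
    by (subst Bochner_Integration.integral_sum) (use integrable_eta_pow in auto)
  also have "\<dots> \<le> (\<Sum>z\<in>{-N..N}. walk_prob k z * Ce)"
    by (intro sum_mono mult_left_mono eta_moment_le walk_prob_nonneg)
  also have "\<dots> = Ce" using walk_prob_sum[OF N] by (simp flip: sum_distrib_right)
  finally show "expectation (\<lambda>\<omega>. initial_part k x \<omega> ^ 12) \<le> Ce" .
qed

lemma noise_part_moment:
  "integrable M (\<lambda>\<omega>. noise_part k x \<omega> ^ 12)"
  "expectation (\<lambda>\<omega>. noise_part k x \<omega> ^ 12) \<le> moment_const 6 * (1 + noise_moment * Cg)^6"
proof -
  have "(\<Sum>j\<in>{1..k}. \<Sum>z\<in>{-window k..window k}. (walk_prob (k - j) z - walk_prob (k - j) (z + 1))^2) \<le> Cg"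
    using gradient_energy_le[of k "window k"]
      sum_reverse_atLeastAtMost[of "\<lambda>i. \<Sum>z\<in>{-window k..window k}. (walk_prob i z - walk_prob i (z + 1))^2" k]
    by (simp add: window_def)
  from noise_double_sum_moment_le[where s=int, OF _ _ walk_prob_diff_abs_le_1 this]
  show "integrable M (\<lambda>\<omega>. noise_part k x \<omega> ^ 12)"
    "expectation (\<lambda>\<omega>. noise_part k x \<omega> ^ 12) \<le> moment_const 6 * (1 + noise_moment * Cg)^6"
    unfolding noise_part_def by auto
qed

lemma increment_moment:
  "integrable M (\<lambda>\<omega>. increment k x \<omega> ^ 12)"
  "expectation (\<lambda>\<omega>. increment k x \<omega> ^ 12) \<le> increment_moment_bound"
proof -
  have bound: "increment k x \<omega> ^ 12 \<le> 2^12 * (initial_part k x \<omega> ^ 12 + noise_part k x \<omega> ^ 12)" for \<omega>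
    using abs_add_pow_le[of "initial_part k x \<omega>" "noise_part k x \<omega>" 12]
    unfolding increment_def by (simp add: power_even_abs)
  have ib: "integrable M (\<lambda>\<omega>. 2^12 * (initial_part k x \<omega> ^ 12 + noise_part k x \<omega> ^ 12))"
    using initial_part_moment(1) noise_part_moment(1) by simp
  show i: "integrable M (\<lambda>\<omega>. increment k x \<omega> ^ 12)"
    by (rule Bochner_Integration.integrable_bound[OF ib])
       (use increment_measurable bound in \<open>auto simp: zero_le_even_power\<close>)
  have "expectation (\<lambda>\<omega>. increment k x \<omega> ^ 12)
      \<le> expectation (\<lambda>\<omega>. 2^12 * (initial_part k x \<omega> ^ 12 + noise_part k x \<omega> ^ 12))"
    by (intro integral_mono i ib bound)
  also have "\<dots> \<le> increment_moment_bound"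
    using initial_part_moment[of k x] noise_part_moment[of k x] unfolding increment_moment_bound_def by simp
  finally show "expectation (\<lambda>\<omega>. increment k x \<omega> ^ 12) \<le> increment_moment_bound" .
qed

lemma increment_moment_bound_nonneg: "0 \<le> increment_moment_bound"
proof -
  have "0 \<le> expectation (\<lambda>\<omega>. increment 0 0 \<omega> ^ 12)"
    by (intro integral_nonneg_AE) (auto simp: zero_le_even_power)
  then show ?thesis using increment_moment(2)[of 0 0] by linarith
qed

lemma height_space_diff_le:
  assumes \<omega>: "\<omega> \<in> space M"
    and small: "\<And>z. \<bar>z\<bar> \<le> L \<Longrightarrow> \<bar>increment k z \<omega>\<bar> \<le> E"
    and x: "\<bar>x\<bar> \<le> L" and y: "\<bar>y\<bar> \<le> L"
  shows "\<bar>h k y \<omega> - h k x \<omega>\<bar> \<le> real_of_int \<bar>y - x\<bar> * E"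
proof -
  have telescope: "\<bar>h k (u + int d) \<omega> - h k u \<omega>\<bar> \<le> real d * E"
    if "\<bar>u\<bar> \<le> L" "\<bar>u + int d\<bar> \<le> L" for u d
    using that
  proof (induction d)
    case (Suc d)
    have "\<bar>h k (u + int d) \<omega> - h k u \<omega>\<bar> \<le> real d * E" by (rule Suc.IH) (use Suc.prems in auto)
    moreover have "h k (u + int (Suc d)) \<omega> - h k (u + int d) \<omega> = increment k (u + int (Suc d)) \<omega>"
      using increment_eq[OF \<omega>, of k "u + int (Suc d)"] by simp
    moreover have "\<bar>increment k (u + int (Suc d)) \<omega>\<bar> \<le> E" by (rule small) (use Suc.prems in auto)
    ultimately show ?case by (simp add: algebra_simps)
  qed simp
  have ordered: "\<bar>h k v \<omega> - h k u \<omega>\<bar> \<le> real_of_int \<bar>v - u\<bar> * E"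
    if "u \<le> v" "\<bar>u\<bar> \<le> L" "\<bar>v\<bar> \<le> L" for u v
    using telescope[of u "nat (v - u)"] that by simp
  show ?thesis
    using ordered[OF _ x y] ordered[OF _ y x] by (cases "x \<le> y") (auto simp: abs_minus_commute)
qed

lemma height_time_diff_le:
  assumes \<omega>: "\<omega> \<in> space M" and E: "0 \<le> E"
    and small: "\<And>z. \<bar>z\<bar> \<le> L + int R \<Longrightarrow> \<bar>increment k z \<omega>\<bar> \<le> E"
    and noise: "\<bar>xi (int k + 1) x \<omega>\<bar> \<le> \<Xi>" and x: "\<bar>x\<bar> \<le> L"
  shows "\<bar>h (Suc k) x \<omega> - h k x \<omega>\<bar> \<le> real R * E + \<Xi>"
proof -
  have jump: "\<bar>p a * (h k (x + a) \<omega> - h k x \<omega>)\<bar> \<le> p a * (real R * E)" if a: "a \<in> {-int R..int R}" for a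
  proof -
    have "\<bar>h k (x + a) \<omega> - h k x \<omega>\<bar> \<le> \<bar>x + a - x\<bar> * E"
      by (rule height_space_diff_le[OF \<omega>, where L="L + int R"]) (use a x small in auto)
    also have "\<dots> \<le> real R * E" using a E by (intro mult_right_mono) auto
    finally show ?thesis using p_nonneg[of a] by (simp add: abs_mult mult_left_mono)
  qed
  have "h (Suc k) x \<omega> - h k x \<omega> = (\<Sum>a\<in>{-int R..int R}. p a * (h k (x + a) \<omega> - h k x \<omega>)) + xi (int k + 1) x \<omega>"
    using h_step[OF \<omega>, of k x] p_sum
    by (simp add: right_diff_distrib sum_subtractf sum_distrib_right[symmetric])
  also have "\<bar>\<dots>\<bar> \<le> \<bar>\<Sum>a\<in>{-int R..int R}. p a * (h k (x + a) \<omega> - h k x \<omega>)\<bar> + \<bar>xi (int k + 1) x \<omega>\<bar>"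
    by (rule abs_triangle_ineq)
  also have "\<dots> \<le> (\<Sum>a\<in>{-int R..int R}. p a * (real R * E)) + \<Xi>"
    by (intro add_mono noise order_trans[OF sum_abs sum_mono[OF jump]])
  also have "\<dots> = real R * E + \<Xi>" using p_sum by (simp flip: sum_distrib_right)
  finally show ?thesis .
qed

lemma height_diff_near_le:
  assumes \<omega>: "\<omega> \<in> space M" and E: "0 \<le> E" and \<Xi>: "0 \<le> \<Xi>"
    and small: "\<And>k z. k \<le> n \<Longrightarrow> \<bar>z\<bar> \<le> L + int R \<Longrightarrow> \<bar>increment k z \<omega>\<bar> \<le> E"
    and noise: "\<And>t y. 1 \<le> t \<Longrightarrow> t \<le> n \<Longrightarrow> \<bar>y\<bar> \<le> L \<Longrightarrow> \<bar>xi (int t) y \<omega>\<bar> \<le> \<Xi>"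
    and k: "k1 \<le> n" "k2 \<le> n" "\<bar>int k1 - int k2\<bar> \<le> 1"
    and x: "\<bar>x1\<bar> \<le> L" "\<bar>x2\<bar> \<le> L" "\<bar>x1 - x2\<bar> \<le> 2"
  shows "\<bar>h k1 x1 \<omega> - h k2 x2 \<omega>\<bar> \<le> (real R + 2) * E + \<Xi>"
proof -
  have space: "\<bar>h k x1 \<omega> - h k x2 \<omega>\<bar> \<le> 2 * E" if "k \<le> n" for k
  proof -
    have "\<bar>h k x1 \<omega> - h k x2 \<omega>\<bar> \<le> \<bar>x1 - x2\<bar> * E"
      by (rule height_space_diff_le[OF \<omega>, where L="L + int R"]) (use that small x in auto)
    also have "\<dots> \<le> 2 * E" using x E by (intro mult_right_mono) auto
    finally show ?thesis .
  qed
  have time: "\<bar>h (Suc k) x \<omega> - h k x \<omega>\<bar> \<le> real R * E + \<Xi>" if "Suc k \<le> n" "\<bar>x\<bar> \<le> L" for k x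
    by (rule height_time_diff_le[OF \<omega> E, where L=L]) (use that small noise[of "Suc k" x] in \<open>auto simp: add.commute\<close>)
  have RE: "0 \<le> real R * E" using E by simp
  consider "k1 = k2" | "k1 = Suc k2" | "k2 = Suc k1" using k by linarith
  then show ?thesis
  proof cases
    case 1
    have "(real R + 2) * E = real R * E + 2 * E" by (simp add: algebra_simps)
    then show ?thesis unfolding 1 using space[OF k(2)] RE \<Xi> by linarith
  next
    case 2
    have "\<bar>h k1 x1 \<omega> - h k2 x2 \<omega>\<bar> \<le> \<bar>h (Suc k2) x1 \<omega> - h k2 x1 \<omega>\<bar> + \<bar>h k2 x1 \<omega> - h k2 x2 \<omega>\<bar>"
      unfolding 2 by linarith
    then show ?thesis using time[of k2 x1] space[of k2] 2 k x by (simp add: algebra_simps)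
  next
    case 3
    have "\<bar>h k1 x1 \<omega> - h k2 x2 \<omega>\<bar> \<le> \<bar>h (Suc k1) x2 \<omega> - h k1 x2 \<omega>\<bar> + \<bar>h k1 x1 \<omega> - h k1 x2 \<omega>\<bar>"
      unfolding 3 by linarith
    then show ?thesis using time[of k1 x2] space[of k1] 3 k x by (simp add: algebra_simps)
  qed
qed

end

section \<open>The modulus of continuity of the rescaled height\<close>

lemma floor_diff_abs_le_1:
  fixes a b :: real
  assumes "\<bar>a - b\<bar> \<le> 1"
  shows "\<bar>\<lfloor>a\<rfloor> - \<lfloor>b\<rfloor>\<bar> \<le> 1"
proof -
  have "real_of_int (\<lfloor>a\<rfloor> - \<lfloor>b\<rfloor>) < 2" "real_of_int (\<lfloor>b\<rfloor> - \<lfloor>a\<rfloor>) < 2"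
    using assms floor_correct[of a] floor_correct[of b] by (simp_all add: abs_le_iff; linarith)+
  then show ?thesis by linarith
qed

lemma grid_indices_close:
  fixes n :: nat and b t r s q \<delta> :: real
  assumes ts: "\<bar>t - s\<bar> \<le> \<delta>" and rq: "\<bar>r - q\<bar> \<le> \<delta>"
    and n\<delta>: "real n * \<delta> \<le> 1" and sqrt\<delta>: "sqrt (real n) * \<delta> \<le> 1" and b\<delta>: "real n * \<delta> * \<bar>b\<bar> \<le> 1"
  shows "\<bar>\<lfloor>real n * t\<rfloor> - \<lfloor>real n * s\<rfloor>\<bar> \<le> 1"
    and "\<bar>(\<lfloor>r * sqrt (real n)\<rfloor> + \<lfloor>real n * t * b\<rfloor>) - (\<lfloor>q * sqrt (real n)\<rfloor> + \<lfloor>real n * s * b\<rfloor>)\<bar> \<le> 2"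
proof -
  have "\<bar>real n * t - real n * s\<bar> = real n * \<bar>t - s\<bar>"
    by (simp add: abs_mult flip: right_diff_distrib)
  also have "\<dots> \<le> real n * \<delta>" using ts by (intro mult_left_mono) auto
  finally show "\<bar>\<lfloor>real n * t\<rfloor> - \<lfloor>real n * s\<rfloor>\<bar> \<le> 1" using n\<delta> by (intro floor_diff_abs_le_1) simp
  have "\<bar>r * sqrt (real n) - q * sqrt (real n)\<bar> = sqrt (real n) * \<bar>r - q\<bar>"
    by (simp add: abs_mult flip: left_diff_distrib)
  also have "\<dots> \<le> sqrt (real n) * \<delta>" using rq by (intro mult_left_mono) auto
  finally have space: "\<bar>\<lfloor>r * sqrt (real n)\<rfloor> - \<lfloor>q * sqrt (real n)\<rfloor>\<bar> \<le> 1"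
    using sqrt\<delta> by (intro floor_diff_abs_le_1) simp
  have "\<bar>real n * t * b - real n * s * b\<bar> = real n * \<bar>t - s\<bar> * \<bar>b\<bar>"
    by (simp add: abs_mult flip: left_diff_distrib right_diff_distrib)
  moreover have "real n * \<bar>t - s\<bar> * \<bar>b\<bar> \<le> real n * \<delta> * \<bar>b\<bar>"
    using ts by (intro mult_right_mono mult_left_mono) auto
  ultimately have "\<bar>\<lfloor>real n * t * b\<rfloor> - \<lfloor>real n * s * b\<rfloor>\<bar> \<le> 1"
    using b\<delta> by (intro floor_diff_abs_le_1) simp
  with space show "\<bar>(\<lfloor>r * sqrt (real n)\<rfloor> + \<lfloor>real n * t * b\<rfloor>) - (\<lfloor>q * sqrt (real n)\<rfloor> + \<lfloor>real n * s * b\<rfloor>)\<bar> \<le> 2"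
    by linarith
qed

lemma abs_floor_le: "real_of_int \<bar>\<lfloor>a\<rfloor>\<bar> \<le> \<bar>a\<bar> + 1"
  using floor_correct[of a] by linarith

lemma grid_space_index_bound:
  fixes n :: nat and b t r :: real
  assumes t: "t \<in> {0..1}" and r: "r \<in> {0..1}"
  shows "\<bar>\<lfloor>r * sqrt (real n)\<rfloor> + \<lfloor>real n * t * b\<rfloor>\<bar> \<le> int n * (1 + \<lceil>\<bar>b\<bar>\<rceil>) + 2"
proof -
  have "sqrt (real n) \<le> real n"
  proof (cases "n = 0")
    case False
    then have "sqrt (real n) * 1 \<le> sqrt (real n) * sqrt (real n)" by (intro mult_left_mono) auto
    then show ?thesis by simp
  qed simp
  then have "\<bar>r * sqrt (real n)\<bar> \<le> real n"
    using r mult_right_mono[of r 1 "sqrt (real n)"] by (simp add: abs_mult)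
  moreover have "\<bar>real n * t * b\<bar> \<le> real n * \<lceil>\<bar>b\<bar>\<rceil>"
  proof -
    have "\<bar>real n * t * b\<bar> = real n * (t * \<bar>b\<bar>)" using t by (simp add: abs_mult)
    also have "\<dots> \<le> real n * \<lceil>\<bar>b\<bar>\<rceil>"
    proof (rule mult_left_mono)
      show "t * \<bar>b\<bar> \<le> of_int \<lceil>\<bar>b\<bar>\<rceil>"
        using t mult_right_mono[of t 1 "\<bar>b\<bar>"] by (auto intro: order_trans[OF _ le_of_int_ceiling])
    qed simp
    finally show ?thesis .
  qed
  ultimately have "real_of_int \<bar>\<lfloor>r * sqrt (real n)\<rfloor> + \<lfloor>real n * t * b\<rfloor>\<bar> \<le> real n + real n * \<lceil>\<bar>b\<bar>\<rceil> + 2"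
    using abs_floor_le[of "r * sqrt (real n)"] abs_floor_le[of "real n * t * b"] by linarith
  also have "\<dots> = real_of_int (int n * (1 + \<lceil>\<bar>b\<bar>\<rceil>) + 2)" by (simp add: algebra_simps)
  finally show ?thesis by linarith
qed

lemma card_grid_le:
  fixes n :: nat and B c :: int
  assumes n: "1 \<le> n" and B: "0 \<le> B" and c: "0 \<le> c"
  shows "real (card ({..n} \<times> {-(int n * B + c)..int n * B + c})) \<le> 2 * of_int (2 * B + 2 * c + 1) * (real n)^2"
proof -
  have "real (card ({..n} \<times> {-(int n * B + c)..int n * B + c})) = (real n + 1) * of_int (2 * (int n * B + c) + 1)"
    using B c by (simp add: card_cartesian_product algebra_simps)
  also have "\<dots> \<le> (2 * real n) * (real n * of_int (2 * B + 2 * c + 1))"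
  proof (intro mult_mono)
    have "of_int (2 * (int n * B + c) + 1) = 2 * (real n * of_int B) + (2 * of_int c + 1)" by simp
    also have "\<dots> \<le> 2 * (real n * of_int B) + real n * (2 * of_int c + 1)"
      using n c by (intro add_left_mono) (simp add: mult_le_cancel_right1)
    finally show "real_of_int (2 * (int n * B + c) + 1) \<le> real n * of_int (2 * B + 2 * c + 1)"
      by (simp add: algebra_simps)
  qed (use n B c in auto)
  finally show ?thesis by (simp add: power2_eq_square algebra_simps)
qed

definition near_pairs :: "real \<Rightarrow> nat \<Rightarrow> ((real \<times> real) \<times> real \<times> real) set" where
  "near_pairs \<gamma> n = {((t, r), (s, q)). (t, r) \<in> {0..1} \<times> {0..1} \<and> (s, q) \<in> {0..1} \<times> {0..1}
                                      \<and> dist (t, r) (s, q) < real n powr (- \<gamma>)}"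

lemma near_pairsD:
  assumes "((t, r), (s, q)) \<in> near_pairs \<gamma> n"
  shows "t \<in> {0..1}" "r \<in> {0..1}" "s \<in> {0..1}" "q \<in> {0..1}"
    and "\<bar>t - s\<bar> \<le> real n powr (- \<gamma>)" "\<bar>r - q\<bar> \<le> real n powr (- \<gamma>)"
proof -
  show "t \<in> {0..1}" "r \<in> {0..1}" "s \<in> {0..1}" "q \<in> {0..1}"
    using assms by (auto simp: near_pairs_def)
  have "sqrt ((t - s)^2 + (r - q)^2) < real n powr (- \<gamma>)"
    using assms by (simp add: near_pairs_def dist_Pair_Pair dist_real_def)
  then show "\<bar>t - s\<bar> \<le> real n powr (- \<gamma>)" "\<bar>r - q\<bar> \<le> real n powr (- \<gamma>)"
    by (metis order.strict_trans1 less_imp_le real_sqrt_sum_squares_ge1 real_sqrt_sum_squares_ge2 power2_abs)+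
qed

context harness
begin

definition bad_event :: "nat \<Rightarrow> int \<Rightarrow> real \<Rightarrow> 'a set" where
  "bad_event n L \<theta> = (\<Union>(k, z)\<in>{..n} \<times> {-L..L}.
      {\<omega>\<in>space M. \<theta> < \<bar>increment k z \<omega>\<bar>} \<union> {\<omega>\<in>space M. \<theta> < \<bar>xi (int k) z \<omega>\<bar>})"

lemma bad_event_sets: "bad_event n L \<theta> \<in> sets M"
  unfolding bad_event_def using increment_measurable xi_meas by (intro sets.finite_UN) auto

lemma prob_bad_event_le:
  assumes \<theta>: "0 < \<theta>"
  shows "prob (bad_event n L \<theta>)
       \<le> real (card ({..n} \<times> {-L..L})) * ((increment_moment_bound + noise_moment) / \<theta>^12)"
proof -
  have xi_pow: "integrable M (\<lambda>\<omega>. xi t x \<omega> ^ 12)" "expectation (\<lambda>\<omega>. xi t x \<omega> ^ 12) \<le> noise_moment" for t x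
    using xi_abs_pow_moment[of 12 t x] by (simp_all add: power_even_abs)
  have "prob (bad_event n L \<theta>) \<le> (\<Sum>(k, z)\<in>{..n} \<times> {-L..L}.
      prob ({\<omega>\<in>space M. \<theta> < \<bar>increment k z \<omega>\<bar>} \<union> {\<omega>\<in>space M. \<theta> < \<bar>xi (int k) z \<omega>\<bar>}))"
    unfolding bad_event_def split_def
    by (intro finite_measure_subadditive_finite) (use increment_measurable xi_meas in auto)
  also have "\<dots> \<le> (\<Sum>(k, z)\<in>{..n} \<times> {-L..L}. increment_moment_bound / \<theta>^12 + noise_moment / \<theta>^12)"
  proof (intro sum_mono, clarify)
    fix k z
    have "prob ({\<omega>\<in>space M. \<theta> < \<bar>increment k z \<omega>\<bar>} \<union> {\<omega>\<in>space M. \<theta> < \<bar>xi (int k) z \<omega>\<bar>})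
        \<le> prob {\<omega>\<in>space M. \<theta> < \<bar>increment k z \<omega>\<bar>} + prob {\<omega>\<in>space M. \<theta> < \<bar>xi (int k) z \<omega>\<bar>}"
      by (intro measure_Un_le) (use increment_measurable xi_meas in auto)
    also have "\<dots> \<le> increment_moment_bound / \<theta>^12 + noise_moment / \<theta>^12"
      by (intro add_mono prob_abs_gt_le_even_moment increment_measurable xi_meas increment_moment xi_pow \<theta>) auto
    finally show "prob ({\<omega>\<in>space M. \<theta> < \<bar>increment k z \<omega>\<bar>} \<union> {\<omega>\<in>space M. \<theta> < \<bar>xi (int k) z \<omega>\<bar>})
        \<le> increment_moment_bound / \<theta>^12 + noise_moment / \<theta>^12" .
  qed
  finally show ?thesis by (simp add: add_divide_distrib)
qed

lemma Zproc_diff_le: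
  fixes mu0 b \<gamma> \<theta> t r s q :: real
  assumes n: "2 \<le> n" and \<gamma>: "1 < \<gamma>" and bn: "real n powr (1 - \<gamma>) * \<bar>b\<bar> \<le> 1"
    and \<omega>: "\<omega> \<in> space M" and \<theta>: "0 \<le> \<theta>"
    and small: "\<And>k z. k \<le> n \<Longrightarrow> \<bar>z\<bar> \<le> L + int R \<Longrightarrow> \<bar>increment k z \<omega>\<bar> \<le> \<theta>"
    and noise: "\<And>t y. 1 \<le> t \<Longrightarrow> t \<le> n \<Longrightarrow> \<bar>y\<bar> \<le> L \<Longrightarrow> \<bar>xi (int t) y \<omega>\<bar> \<le> \<theta>"
    and L: "L = int n * (1 + \<lceil>\<bar>b\<bar>\<rceil>) + 2"
    and near: "((t, r), (s, q)) \<in> near_pairs \<gamma> n"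
  shows "\<bar>Zproc h mu0 b n t r \<omega> - Zproc h mu0 b n s q \<omega>\<bar>
      \<le> real n powr (-1/4) * ((real R + 3) * \<theta>) + \<bar>mu0\<bar> * real n powr (1/4 - \<gamma>)"
proof -
  define \<delta> where "\<delta> = real n powr (- \<gamma>)"
  have npos: "0 < real n" and n1: "1 < real n" using n by auto
  note tr = near_pairsD(1-4)[OF near] and ts = near_pairsD(5)[OF near, folded \<delta>_def]
    and rq = near_pairsD(6)[OF near, folded \<delta>_def]
  have n\<delta>: "real n * \<delta> = real n powr (1 - \<gamma>)" and sqrt\<delta>: "sqrt (real n) * \<delta> = real n powr (1/2 - \<gamma>)"
    unfolding \<delta>_def using npos by (simp_all add: powr_mult_base powr_half_sqrt[symmetric] powr_add[symmetric])
  have "real n powr (1 - \<gamma>) < 1" "real n powr (1/2 - \<gamma>) < 1"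
    using n1 \<gamma> by (auto intro!: powr_less_one)
  note close = grid_indices_close[OF ts rq, where b=b] this n\<delta> sqrt\<delta> bn
  define k1 k2 x1 x2 where "k1 = nat \<lfloor>real n * t\<rfloor>" and "k2 = nat \<lfloor>real n * s\<rfloor>"
    and "x1 = \<lfloor>r * sqrt (real n)\<rfloor> + \<lfloor>real n * t * b\<rfloor>" and "x2 = \<lfloor>q * sqrt (real n)\<rfloor> + \<lfloor>real n * s * b\<rfloor>"
  have "\<lfloor>real n * t\<rfloor> \<le> int n" "\<lfloor>real n * s\<rfloor> \<le> int n"
    using tr mult_left_le[of t "real n"] mult_left_le[of s "real n"]
      floor_mono[of "real n * t" "real n"] floor_mono[of "real n * s" "real n"] by auto
  then have k: "int k1 = \<lfloor>real n * t\<rfloor>" "int k2 = \<lfloor>real n * s\<rfloor>" "k1 \<le> n" "k2 \<le> n"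
    using tr unfolding k1_def k2_def by (auto simp: nat_le_iff)
  have "\<bar>h k1 x1 \<omega> - h k2 x2 \<omega>\<bar> \<le> (real R + 2) * \<theta> + \<theta>"
    using close tr by (intro height_diff_near_le[OF \<omega> \<theta> \<theta> small noise k(3,4)])
      (auto simp: k(1,2) x1_def x2_def L intro: grid_space_index_bound)
  moreover have "\<bar>mu0 * (r - q) * sqrt (real n)\<bar> = \<bar>mu0\<bar> * (sqrt (real n) * \<bar>r - q\<bar>)"
    by (simp add: abs_mult)
  moreover have "\<dots> \<le> \<bar>mu0\<bar> * (sqrt (real n) * \<delta>)"
    using rq by (intro mult_left_mono) auto
  ultimately have D: "\<bar>(h k1 x1 \<omega> - h k2 x2 \<omega>) - mu0 * (r - q) * sqrt (real n)\<bar>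
      \<le> (real R + 3) * \<theta> + \<bar>mu0\<bar> * real n powr (1/2 - \<gamma>)"
    unfolding sqrt\<delta> by (simp add: algebra_simps)
  have "Zproc h mu0 b n t r \<omega> - Zproc h mu0 b n s q \<omega>
      = real n powr (-1/4) * ((h k1 x1 \<omega> - h k2 x2 \<omega>) - mu0 * (r - q) * sqrt (real n))"
    unfolding Zproc_def k1_def k2_def x1_def x2_def by (simp add: algebra_simps)
  then have "\<bar>Zproc h mu0 b n t r \<omega> - Zproc h mu0 b n s q \<omega>\<bar>
      \<le> real n powr (-1/4) * ((real R + 3) * \<theta> + \<bar>mu0\<bar> * real n powr (1/2 - \<gamma>))"
    using D by (simp add: abs_mult mult_left_mono)
  also have "\<dots> = real n powr (-1/4) * ((real R + 3) * \<theta>) + \<bar>mu0\<bar> * real n powr (1/4 - \<gamma>)"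
    by (simp add: distrib_left powr_add[symmetric] mult.left_commute)
  finally show ?thesis .
qed

lemma Zproc_sup_le:
  fixes mu0 b \<gamma> \<theta> :: real
  assumes n: "2 \<le> n" and \<gamma>: "1 < \<gamma>" and bn: "real n powr (1 - \<gamma>) * \<bar>b\<bar> \<le> 1"
    and \<omega>: "\<omega> \<in> space M" and good: "\<omega> \<notin> bad_event n (int n * (1 + \<lceil>\<bar>b\<bar>\<rceil>) + 2 + int R) \<theta>"
    and \<theta>: "0 \<le> \<theta>"
  shows "(SUP ((t, r), (s, q)) \<in> near_pairs \<gamma> n. \<bar>Zproc h mu0 b n t r \<omega> - Zproc h mu0 b n s q \<omega>\<bar>)
       \<le> real n powr (-1/4) * ((real R + 3) * \<theta>) + \<bar>mu0\<bar> * real n powr (1/4 - \<gamma>)"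
proof (rule cSUP_least)
  have "((0, 0), (0, 0)) \<in> near_pairs \<gamma> n" using n by (simp add: near_pairs_def)
  then show "near_pairs \<gamma> n \<noteq> {}" by blast
  define L where "L = int n * (1 + \<lceil>\<bar>b\<bar>\<rceil>) + 2"
  have outside: "\<bar>increment k z \<omega>\<bar> \<le> \<theta> \<and> \<bar>xi (int k) z \<omega>\<bar> \<le> \<theta>"
    if "k \<le> n" "\<bar>z\<bar> \<le> L + int R" for k z
  proof (rule ccontr)
    assume "\<not> ?thesis"
    then have "\<omega> \<in> bad_event n (L + int R) \<theta>"
      unfolding bad_event_def using that \<omega> by (intro UN_I[of "(k, z)"]) auto
    then show False using good by (simp add: L_def)
  qed
  have small: "\<bar>increment k z \<omega>\<bar> \<le> \<theta>" if "k \<le> n" "\<bar>z\<bar> \<le> L + int R" for k z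
    using outside[OF that] by simp
  have noise: "\<bar>xi (int t) y \<omega>\<bar> \<le> \<theta>" if "1 \<le> t" "t \<le> n" "\<bar>y\<bar> \<le> L" for t y
    using outside[of t y] that by simp
  fix x assume "x \<in> near_pairs \<gamma> n"
  then show "(\<lambda>((t, r), (s, q)). \<bar>Zproc h mu0 b n t r \<omega> - Zproc h mu0 b n s q \<omega>\<bar>) x
      \<le> real n powr (-1/4) * ((real R + 3) * \<theta>) + \<bar>mu0\<bar> * real n powr (1/4 - \<gamma>)"
    using Zproc_diff_le[OF n \<gamma> bn \<omega> \<theta> small noise L_def] by (auto split: prod.splits)
qed

lemma oscillation_event_subset:
  fixes mu0 b \<gamma> c :: real
  assumes n: "2 \<le> n" and \<gamma>: "1 < \<gamma>" and bn: "real n powr (1 - \<gamma>) * \<bar>b\<bar> \<le> 1" and c: "0 \<le> c"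
  shows "{\<omega> \<in> space M. (real R + 3) * c + \<bar>mu0\<bar> * real n powr (1/4 - \<gamma>)
            < (SUP ((t, r), (s, q)) \<in> near_pairs \<gamma> n. \<bar>Zproc h mu0 b n t r \<omega> - Zproc h mu0 b n s q \<omega>\<bar>)}
         \<subseteq> bad_event n (int n * (1 + \<lceil>\<bar>b\<bar>\<rceil>) + 2 + int R) (c * real n powr (1/4))"
proof (rule subsetI, rule ccontr)
  fix \<omega> assume \<omega>: "\<omega> \<in> {\<omega> \<in> space M. (real R + 3) * c + \<bar>mu0\<bar> * real n powr (1/4 - \<gamma>)
      < (SUP ((t, r), (s, q)) \<in> near_pairs \<gamma> n. \<bar>Zproc h mu0 b n t r \<omega> - Zproc h mu0 b n s q \<omega>\<bar>)}"
    and good: "\<omega> \<notin> bad_event n (int n * (1 + \<lceil>\<bar>b\<bar>\<rceil>) + 2 + int R) (c * real n powr (1/4))"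
  have "real n powr (-1/4) * real n powr (1/4) = 1" using n by (simp add: powr_add[symmetric])
  then have scale: "real n powr (-1/4) * ((real R + 3) * (c * real n powr (1/4))) = (real R + 3) * c"
    by (simp add: algebra_simps)
  have "(SUP ((t, r), (s, q)) \<in> near_pairs \<gamma> n. \<bar>Zproc h mu0 b n t r \<omega> - Zproc h mu0 b n s q \<omega>\<bar>)
      \<le> (real R + 3) * c + \<bar>mu0\<bar> * real n powr (1/4 - \<gamma>)"
    using Zproc_sup_le[OF n \<gamma> bn _ good, of mu0] \<omega> c unfolding scale by simp
  then show False using \<omega> by simp
qed

lemma prob_bad_event_scaled_le:
  fixes B C :: int and c :: real
  assumes n: "1 \<le> n" and B: "0 \<le> B" and C: "0 \<le> C" and c: "0 < c"
  shows "prob (bad_event n (int n * B + C) (c * real n powr (1/4)))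
       \<le> 2 * of_int (2 * B + 2 * C + 1) * (increment_moment_bound + noise_moment) / c^12 / real n"
proof -
  define G :: real where "G = 2 * of_int (2 * B + 2 * C + 1)"
  define D where "D = increment_moment_bound + noise_moment"
  have npos: "0 < real n" using n by simp
  have \<theta>: "0 < c * real n powr (1/4)" using c npos by simp
  have \<theta>12: "(c * real n powr (1/4)) ^ 12 = c^12 * real n ^ 3"
  proof -
    have "(real n powr (1/4)) ^ 12 = real n powr 3" using npos by (simp add: powr_power)
    then show ?thesis using npos by (simp add: power_mult_distrib)
  qed
  have "prob (bad_event n (int n * B + C) (c * real n powr (1/4)))
      \<le> real (card ({..n} \<times> {-(int n * B + C)..int n * B + C})) * (D / (c * real n powr (1/4)) ^ 12)"
    unfolding D_def by (rule prob_bad_event_le[OF \<theta>])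
  also have "\<dots> \<le> G * (real n)^2 * (D / (c * real n powr (1/4)) ^ 12)"
    unfolding G_def D_def using increment_moment_bound_nonneg noise_moment_ge_1 \<theta>
    by (intro mult_right_mono card_grid_le n B C) simp
  also have "\<dots> = G * D / c^12 / real n"
    unfolding \<theta>12 using npos c by (simp add: field_simps power2_eq_square power3_eq_cube)
  finally show ?thesis unfolding G_def D_def .
qed

lemma Zproc_modulus_limit:
  fixes mu0 b \<gamma> \<epsilon> :: real
  assumes \<gamma>: "1 < \<gamma>" and \<epsilon>: "0 < \<epsilon>"
  shows "(\<lambda>n. measure M {\<omega> \<in> space M.
            (SUP ((t, r), (s, q)) \<in> near_pairs \<gamma> n. \<bar>Zproc h mu0 b n t r \<omega> - Zproc h mu0 b n s q \<omega>\<bar>) > \<epsilon>})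
         \<longlonglongrightarrow> 0"
proof -
  define c where "c = \<epsilon> / (2 * (real R + 3))"
  define K where "K = 2 * of_int (2 * (1 + \<lceil>\<bar>b\<bar>\<rceil>) + 2 * (2 + int R) + 1)
                        * (increment_moment_bound + noise_moment) / c^12"
  have c: "0 < c" and c\<epsilon>: "(real R + 3) * c = \<epsilon> / 2" using \<epsilon> by (simp_all add: c_def field_simps)
  have "(\<lambda>n. real n powr (1 - \<gamma>)) \<longlonglongrightarrow> 0" "(\<lambda>n. real n powr (1/4 - \<gamma>)) \<longlonglongrightarrow> 0"
    using \<gamma> by (auto intro!: tendsto_neg_powr filterlim_real_sequentially)
  then have "eventually (\<lambda>n. real n powr (1 - \<gamma>) * \<bar>b\<bar> < 1) sequentially"
    "eventually (\<lambda>n. \<bar>mu0\<bar> * real n powr (1/4 - \<gamma>) < \<epsilon>/2) sequentially"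
    using \<epsilon> by (auto intro!: order_tendstoD(2) tendsto_mult_left_zero tendsto_mult_right_zero)
  then have "eventually (\<lambda>n. measure M {\<omega> \<in> space M.
      (SUP ((t, r), (s, q)) \<in> near_pairs \<gamma> n. \<bar>Zproc h mu0 b n t r \<omega> - Zproc h mu0 b n s q \<omega>\<bar>) > \<epsilon>}
      \<le> K / real n) sequentially"
    using eventually_ge_at_top[of 2]
  proof eventually_elim
    case (elim n)
    have "{\<omega> \<in> space M.
        (SUP ((t, r), (s, q)) \<in> near_pairs \<gamma> n. \<bar>Zproc h mu0 b n t r \<omega> - Zproc h mu0 b n s q \<omega>\<bar>) > \<epsilon>}
        \<subseteq> {\<omega> \<in> space M. (real R + 3) * c + \<bar>mu0\<bar> * real n powr (1/4 - \<gamma>)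
            < (SUP ((t, r), (s, q)) \<in> near_pairs \<gamma> n. \<bar>Zproc h mu0 b n t r \<omega> - Zproc h mu0 b n s q \<omega>\<bar>)}"
      using elim(2) unfolding c\<epsilon> by auto
    also have "\<dots> \<subseteq> bad_event n (int n * (1 + \<lceil>\<bar>b\<bar>\<rceil>) + (2 + int R)) (c * real n powr (1/4))"
      using oscillation_event_subset[OF elim(3) \<gamma> _ less_imp_le[OF c], of b mu0] elim(1)
      by (simp add: add.assoc)
    finally show ?case
      unfolding K_def
      by (rule order.trans[OF prob_le_of_subset[OF _ bad_event_sets] prob_bad_event_scaled_le])
         (use elim(3) c in auto)
  qed
  then show ?thesis
    by (intro tendsto_sandwich[where f="\<lambda>_. 0" and h="\<lambda>n. K / real n", OF _ _ tendsto_const lim_const_over_n])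
       (auto elim: eventually_mono)
qed

end

theorem lemma6p5:
  fixes M :: "'a measure"
    and p :: "int \<Rightarrow> real" and Mr :: nat
    and xi :: "int \<Rightarrow> int \<Rightarrow> 'a \<Rightarrow> real"
    and h :: "nat \<Rightarrow> int \<Rightarrow> 'a \<Rightarrow> real"
    and eta :: "int \<Rightarrow> 'a \<Rightarrow> real"
    and mp b sigma1sq mu0 \<gamma> \<epsilon> :: real
  assumes P: "prob_space M"
    and p_nonneg: "\<And>x. 0 \<le> p x" and p_lt1: "\<And>x. p x < 1"
    and p_sum: "(p has_sum 1) UNIV"
    and p_supp: "\<And>x. \<bar>x\<bar> > int Mr \<Longrightarrow> p x = 0"
    and p_aper: "\<And>u. int_subgroup_gen {u + x | x. p x > 0} = UNIV"
    and mp_def: "mp = (\<Sum>\<^sub>\<infinity>x. real_of_int x * p x)"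
    and b_def: "b = - mp"
    and sigma_def: "sigma1sq = (\<Sum>\<^sub>\<infinity>x. (real_of_int x - mp)^2 * p x)"
    and sigma_pos: "sigma1sq > 0"
    and xi_meas: "\<And>t x. xi t x \<in> borel_measurable M"
    and xi_indep: "prob_space.indep_vars M (\<lambda>_. borel) (\<lambda>(t, x). xi t x) UNIV"
    and xi_ident: "\<And>t x. distr M borel (xi t x) = distr M borel (xi 0 0)"
    and xi_int: "integrable M (xi 0 0)"
    and xi_mean: "integral\<^sup>L M (xi 0 0) = 0"
    and xi_mom: "integrable M (\<lambda>\<omega>. (xi 0 0 \<omega>) ^ 12)"
    and h_step: "\<And>t x \<omega>. \<omega> \<in> space M \<Longrightarrow>
        h (Suc t) x \<omega> = (\<Sum>\<^sub>\<infinity>y. p (y - x) * h t y \<omega>) + xi (int t + 1) x \<omega>"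
    and h0_0: "\<And>\<omega>. \<omega> \<in> space M \<Longrightarrow> h 0 0 \<omega> = 0"
    and eta_def: "\<And>x \<omega>. \<omega> \<in> space M \<Longrightarrow> eta x \<omega> = h 0 x \<omega> - h 0 (x - 1) \<omega>"
    and eta_meas: "\<And>x. eta x \<in> borel_measurable M"
    and eta_stat: "\<And>k. distr M (PiM UNIV (\<lambda>_. borel)) (\<lambda>\<omega> x. eta (x + k) \<omega>)
                       = distr M (PiM UNIV (\<lambda>_. borel)) (\<lambda>\<omega> x. eta x \<omega>)"
    and eta_indep: "prob_space.indep_set M (gen_field M eta UNIV)
        (gen_field M (\<lambda>(t, x). xi t x) {(t, x). t \<ge> 1})"
    and eta_int: "\<And>x. integrable M (eta x)"
    and eta_mean: "\<And>x. integral\<^sup>L M (eta x) = mu0"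
    and cases:
      "(prob_space.indep_vars M (\<lambda>_. borel) eta UNIV
          \<and> (\<forall>x. distr M borel (eta x) = distr M borel (eta 0))
          \<and> integrable M (\<lambda>\<omega>. (eta 0 \<omega>) ^ 12))
       \<or> ((strong_mixing_coeff M eta \<longlonglongrightarrow> 0)
          \<and> (\<exists>\<delta>>0. integrable M (\<lambda>\<omega>. \<bar>eta 0 \<omega>\<bar> powr (12 + \<delta>))
                 \<and> summable (\<lambda>j. (real j + 1) powr (10 + 132 / \<delta>) * strong_mixing_coeff M eta j)))
       \<or> (\<forall>x. AE \<omega> in M. (\<lambda>k. \<Sum>\<^sub>\<infinity>y. xi (- int k) y \<omega> * (kstep p k (y - x) - kstep p k (y - x + 1)))
                           sums eta x \<omega>)"
    and gamma: "1 < \<gamma>" "\<gamma> < 3/2"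
    and eps: "\<epsilon> > 0"
  shows "(\<lambda>n. measure M {\<omega> \<in> space M.
            (SUP ((t, r), (s, q)) \<in> {((t, r), (s, q)). (t, r) \<in> {0..1} \<times> {0..1} \<and> (s, q) \<in> {0..1} \<times> {0..1}
                                      \<and> dist (t, r) (s, q) < real n powr (- \<gamma>)}.
               \<bar>Zproc h mu0 b n t r \<omega> - Zproc h mu0 b n s q \<omega>\<bar>) > \<epsilon>})
         \<longlonglongrightarrow> 0"
proof -
  interpret prob_space M by (rule P)
  interpret noise_walk M xi p Mr
    using xi_meas xi_indep xi_ident xi_mean xi_mom p_nonneg p_supp has_sum_int_window[OF p_sum p_supp]
    by unfold_locales auto
  obtain Cg where grad: "\<And>k N. int k * int Mr + 1 \<le> N \<Longrightarrow>
      (\<Sum>i<k. \<Sum>z\<in>{-N..N}. (walk_prob i z - walk_prob i (z + 1))^2) \<le> Cg"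
    using walk_gradient_energy_bounded[OF p_aper] by blast
  obtain Ce where "\<And>x. integrable M (\<lambda>\<omega>. eta x \<omega> ^ 12)" "\<And>x. expectation (\<lambda>\<omega>. eta x \<omega> ^ 12) \<le> Ce"
    using initial_increment_moment_bounded[OF eta_meas eta_stat grad] cases by blast
  moreover have "h (Suc t) x \<omega> = (\<Sum>a\<in>{-int Mr..int Mr}. p a * h t (x + a) \<omega>) + xi (int t + 1) x \<omega>"
    if "\<omega> \<in> space M" for t x \<omega>
    using h_step[OF that] infsum_int_window_shift[OF p_supp] by simp
  ultimately interpret harness M xi p Mr h eta Ce Cg
    using eta_def eta_meas grad by unfold_locales auto
  show ?thesis using Zproc_modulus_limit[OF gamma(1) eps] unfolding near_pairs_def .
qed

end
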